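(* Let $\mathcal{X}$ be a locally compact, Hausdorff, second-countable single-target state space, and let $X_k$ be the (finite) set of targets at time step $k$. Suppose the set $Z_k$ of measurements at time $k$ is generated as follows: given $X_k$, each target $x\in X_k$ independently generates a finite set $Z\subset\mathbb{R}^{n_z}$ of measurements with multi-object density $f(Z\mid x)$ (an arbitrary density on finite subsets of $\mathbb{R}^{n_z}$), clutter is an independent Poisson point process (PPP) with intensity $\lambda^C(\cdot)$, and $Z_k$ is the union of all target-generated sets and the clutter. Let $Z_k=\{z_k^1,\dots,z_k^{m_k}\}$ and let $Z_k^1,\dots,Z_k^{2^{m_k}-1}$ be the nonempty subsets of $Z_k$. Assume the predicted density $f_{k|k-1}$ of $X_k$ is a Poisson multi-Bernoulli mixture (PMBM): $$f_{k|k-1}(X)=\sum_{Y\uplus W=X} f^{\mathrm{p}}_{k|k-1}(Y)\,f^{\mathrm{mbm}}_{k|k-1}(W),\qquad f^{\mathrm{p}}_{k|k-1}(X)=e^{-\int\lambda_{k|k-1}(x)dx}\prod_{x\in X}\lambda_{k|k-1}(x),$$ $$f^{\mathrm{mbm}}_{k|k-1}(X)=\sum_{a\in\mathcal{A}_{k|k-1}}w^{a}_{k|k-1}\sum_{\uplus_{l=1}^{n_{k|k-1}}X^l=X}\ \prod_{i=1}^{n_{k|k-1}}f^{i,a^i}_{k|k-1}(X^i),$$ where each $f^{i,a^i}_{k|k-1}$ is a Bernoulli density with existence probability $r^{i,a^i}_{k|k-1}$ and single-target density $f^{i,a^i}_{k|k-1}(x)$, each Bernoulli $i\in\{1,\dots,n_{k|k-1}\}$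 has local hypotheses $a^i\in\{1,\dots,h^i_{k|k-1}\}$ with local weights $w^{i,a^i}_{k|k-1}$ and associated sets of measurement pairs $\mathcal{M}^{i,a^i}_{k-1}\subseteq\mathcal{M}_{k-1}$, the set $\mathcal{A}_{k|k-1}$ of global hypotheses consists of all tuples $a=(a^1,\dots,a^{n_{k|k-1}})$ with $\bigcup_i\mathcal{M}^{i,a^i}_{k-1}=\mathcal{M}_{k-1}$ and $\mathcal{M}^{i,a^i}_{k-1}\cap\mathcal{M}^{j,a^j}_{k-1}=\emptyset$ for $i\neq j$, and $w^a_{k|k-1}\propto\prod_i w^{i,a^i}_{k|k-1}$ normalised to sum to one over $\mathcal{A}_{k|k-1}$. Then the updated density $f_{k|k}(X)\propto f(Z_k\mid X)f_{k|k-1}(X)$ (the posterior of $X_k$ given $Z_k$) is again a PMBM of the same form (with $k-1$ replaced by $k$ in the measurement-pair sets, global hypotheses $\mathcal{A}_{k|k}$ defined by the same covering/disjointness condition with respect to $\mathcal{M}_k$, and global weights $w^a_{k|k}\propto\prod_i w^{i,a^i}_{k|k}$), with the following parameters. (i) The number of Bernoulli components is $n_{k|k}=n_{k|k-1}+2^{m_k}-1$, and the PPP intensity is $\lambda_{k|k}(x)=f(\emptyset\mid x)\lambda_{k|k-1}(x)$. (ii) For each $i\in\{1,\dots,n_{k|k-1}\}$, $h^i_{k|k}=2^{m_k}h^i_{k|k-1}$. Missed-detection hypotheses $a^i\in\{1,\dots,h^i_{k|k-1}\}$ have $\mathcal{M}^{i,a^i}_k=\mathcal{M}^{i,a^i}_{k-1}$,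 and with $l^{i,a^i,\emptyset}_{k|k}=\langle f^{i,a^i}_{k|k-1},f(\emptyset\mid\cdot)\rangle$: $$w^{i,a^i}_{k|k}=w^{i,a^i}_{k|k-1}\big[1-r^{i,a^i}_{k|k-1}+r^{i,a^i}_{k|k-1}l^{i,a^i,\emptyset}_{k|k}\big],\quad r^{i,a^i}_{k|k}=\frac{r^{i,a^i}_{k|k-1}l^{i,a^i,\emptyset}_{k|k}}{1-r^{i,a^i}_{k|k-1}+r^{i,a^i}_{k|k-1}l^{i,a^i,\emptyset}_{k|k}},\quad f^{i,a^i}_{k|k}(x)=\frac{f(\emptyset\mid x)f^{i,a^i}_{k|k-1}(x)}{l^{i,a^i,\emptyset}_{k|k}}.$$ For a predicted local hypothesis $\tilde a^i\in\{1,\dots,h^i_{k|k-1}\}$ and $j\in\{1,\dots,2^{m_k}-1\}$, the local hypothesis $a^i=\tilde a^i+h^i_{k|k-1}j$ has $r^{i,a^i}_{k|k}=1$, $\mathcal{M}^{i,a^i}_k=\mathcal{M}^{i,\tilde a^i}_{k-1}\cup\{(k,p):z_k^p\in Z_k^j\}$, and with $l^{i,a^i,Z_k^j}_{k|k}=\langle f^{i,\tilde a^i}_{k|k-1},f(Z_k^j\mid\cdot)\rangle$: $$w^{i,a^i}_{k|k}=w^{i,\tilde a^i}_{k|k-1}r^{i,\tilde a^i}_{k|k-1}l^{i,a^i,Z_k^j}_{k|k},\qquad f^{i,a^i}_{k|k}(x)=\frac{f(Z_k^j\mid x)f^{i,\tilde a^i}_{k|k-1}(x)}{l^{i,a^i,Z_k^j}_{k|k}}.$$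 (iii) For each $j\in\{1,\dots,2^{m_k}-1\}$, the new Bernoulli with index $i=n_{k|k-1}+j$ has $h^i_{k|k}=2$ local hypotheses: one with $\mathcal{M}^{i,1}_k=\emptyset$, $w^{i,1}_{k|k}=1$, $r^{i,1}_{k|k}=0$; and one with $\mathcal{M}^{i,2}_k=\{(k,p):z_k^p\in Z_k^j\}$ and, with $l^{Z_k^j}_{k|k}=\langle\lambda_{k|k-1},f(Z_k^j\mid\cdot)\rangle$, $$w^{i,2}_{k|k}=\delta_1\big[|Z_k^j|\big]\prod_{z\in Z_k^j}\lambda^C(z)+l^{Z_k^j}_{k|k},\qquad r^{i,2}_{k|k}=\frac{l^{Z_k^j}_{k|k}}{w^{i,2}_{k|k}},\qquad f^{i,2}_{k|k}(x)=\frac{f(Z_k^j\mid x)\lambda_{k|k-1}(x)}{l^{Z_k^j}_{k|k}}.$$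
   Context: For finite sets, $\uplus$ denotes disjoint union, and sums of the form $\sum_{Y\uplus W=X}$ (resp. $\sum_{\uplus_l X^l=X}$) range over all ordered decompositions of the fixed set $X$ into mutually disjoint, possibly empty, subsets. A Bernoulli density with existence probability $r$ and single-target density $p$ is $f(\emptyset)=1-r$, $f(\{x\})=rp(x)$, and $f(X)=0$ if $|X|>1$. Measurement $z_t^j$ (the $j$-th measurement at time $t$) is referred to by the pair $(t,j)$, and $\mathcal{M}_t$ denotes the set of all such pairs up to and including time $t$. $\langle a,b\rangle=\int a(x)b(x)\,dx$ for real functions on the target space. $\delta_1[u]=1$ if $u=1$ and $0$ otherwise. *)

theory Defs
  imports "HOL-Analysis.Analysis" "HOL-Library.FuncSet"
begin

definition meas_pairs :: "(nat \<Rightarrow> nat) \<Rightarrow> nat \<Rightarrow> (nat \<times> nat) set" where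
  "meas_pairs mc T = {(t, j). 1 \<le> t \<and> t \<le> T \<and> 1 \<le> j \<and> j \<le> mc t}"

definition bern_dens :: "real \<Rightarrow> ('x \<Rightarrow> real) \<Rightarrow> 'x set \<Rightarrow> real" where
  "bern_dens r p X = (if X = {} then 1 - r else if card X = 1 then r * p (the_elem X) else 0)"

definition ppp_dens :: "'x measure \<Rightarrow> ('x \<Rightarrow> real) \<Rightarrow> 'x set \<Rightarrow> real" where
  "ppp_dens mu lam X = exp (- (\<integral>x. lam x \<partial>mu)) * (\<Prod>x\<in>X. lam x)"

definition decomps :: "nat \<Rightarrow> 'x set \<Rightarrow> (nat \<Rightarrow> 'x set) set" where
  "decomps n X = {Xs \<in> Pi\<^sub>E {1..n} (\<lambda>_. Pow X).
      (\<Union>i\<in>{1..n}. Xs i) = X \<and> (\<forall>i\<in>{1..n}. \<forall>j\<in>{1..n}. i \<noteq> j \<longrightarrow> Xs i \<inter> Xs j = {})}"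

definition glob_hyps :: "nat \<Rightarrow> (nat \<Rightarrow> nat) \<Rightarrow> (nat \<Rightarrow> nat \<Rightarrow> (nat \<times> nat) set)
     \<Rightarrow> (nat \<times> nat) set \<Rightarrow> (nat \<Rightarrow> nat) set" where
  "glob_hyps n h M Mall = {a \<in> Pi\<^sub>E {1..n} (\<lambda>i. {1..h i}).
      (\<Union>i\<in>{1..n}. M i (a i)) = Mall \<and>
      (\<forall>i\<in>{1..n}. \<forall>j\<in>{1..n}. i \<noteq> j \<longrightarrow> M i (a i) \<inter> M j (a j) = {})}"

definition mbm_dens :: "nat \<Rightarrow> (nat \<Rightarrow> nat) \<Rightarrow> (nat \<Rightarrow> nat \<Rightarrow> real) \<Rightarrow> (nat \<Rightarrow> nat \<Rightarrow> real)
     \<Rightarrow> (nat \<Rightarrow> nat \<Rightarrow> 'x \<Rightarrow> real) \<Rightarrow> (nat \<Rightarrow> nat \<Rightarrow> (nat \<times> nat) set) \<Rightarrow> (nat \<times> nat) set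
     \<Rightarrow> 'x set \<Rightarrow> real" where
  "mbm_dens n h w r f M Mall X =
     (\<Sum>a\<in>glob_hyps n h M Mall.
        ((\<Prod>i\<in>{1..n}. w i (a i)) / (\<Sum>a'\<in>glob_hyps n h M Mall. \<Prod>i\<in>{1..n}. w i (a' i))) *
        (\<Sum>Xs\<in>decomps n X. \<Prod>i\<in>{1..n}. bern_dens (r i (a i)) (f i (a i)) (Xs i)))"

definition pmbm_dens :: "'x measure \<Rightarrow> ('x \<Rightarrow> real) \<Rightarrow> nat \<Rightarrow> (nat \<Rightarrow> nat) \<Rightarrow> (nat \<Rightarrow> nat \<Rightarrow> real)
     \<Rightarrow> (nat \<Rightarrow> nat \<Rightarrow> real) \<Rightarrow> (nat \<Rightarrow> nat \<Rightarrow> 'x \<Rightarrow> real) \<Rightarrow> (nat \<Rightarrow> nat \<Rightarrow> (nat \<times> nat) set)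
     \<Rightarrow> (nat \<times> nat) set \<Rightarrow> 'x set \<Rightarrow> real" where
  "pmbm_dens mu lam n h w r f M Mall X =
     (\<Sum>Y\<in>Pow X. ppp_dens mu lam Y * mbm_dens n h w r f M Mall (X - Y))"

text \<open>Measurement likelihood f(Z|X): Z is the disjoint union of the sets Z^x (x \<in> X),
  generated independently with densities g(Z^x|x), and of PPP clutter Z^C with
  intensity lamC (w.r.t. Lebesgue measure); density of a union of independent RFSs.\<close>
definition meas_lik :: "('z::euclidean_space \<Rightarrow> real) \<Rightarrow> ('z set \<Rightarrow> 'x \<Rightarrow> real) \<Rightarrow> 'z set \<Rightarrow> 'x set \<Rightarrow> real" where
  "meas_lik lamC g Z X =
     (\<Sum>Zs\<in>{Zs \<in> Pi\<^sub>E X (\<lambda>_. Pow Z). \<forall>x\<in>X. \<forall>y\<in>X. x \<noteq> y \<longrightarrow> Zs x \<inter> Zs y = {}}.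
        exp (- (\<integral>z. lamC z \<partial>lborel)) * (\<Prod>z\<in>Z - (\<Union>x\<in>X. Zs x). lamC z) *
        (\<Prod>x\<in>X. g (Zs x) x))"

end

theory Submission
  imports Defs
begin

text \<open>
  Both sides are expanded into finite sums of products. A term on the left is indexed by the set
  \<open>Y\<close> of targets drawn from the Poisson part, a predicted global hypothesis \<open>a\<close>, an assignment
  \<open>Xs\<close> of the other targets to the Bernoulli components and an association \<open>Zs\<close> of pairwise
  disjoint measurement sets to the targets; the measurements associated with no target are clutter.
  A term on the right is indexed by the set \<open>Y'\<close> of undetected Poisson targets, an updated global
  hypothesis \<open>a'\<close> and an assignment \<open>Xs'\<close>.

  Terms in which a Bernoulli component holds two targets vanish, and so do posterior terms whose local
  hypotheses contradict the assignment. The remaining terms correspond bijectively and with equal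
  values: a detected Poisson target moves to the new Bernoulli indexed by its measurement set; a
  single clutter measurement \<open>z\<close> is explained by the new Bernoulli indexed by \<open>{z}\<close>, empty but
  in its second local hypothesis; and local hypothesis \<open>b\<close> of a previous Bernoulli \<open>i\<close> becomes
  \<open>b + h i * j\<close>, where \<open>Z\<^sup>j\<close> is the measurement set of its target (\<open>Z\<^sup>0 = {}\<close>). The two sides
  therefore differ by the ratio of their normalising constants, which is positive.
\<close>

section \<open>Bernoulli densities\<close>

definition subsingleton :: "'a set \<Rightarrow> bool" where
  "subsingleton T \<longleftrightarrow> (\<forall>x\<in>T. \<forall>y\<in>T. x = y)"

lemma subsingleton_cases:
  assumes "subsingleton T"
  obtains "T = {}" | x where "T = {x}"
  using assms unfolding subsingleton_def by blast

lemma bern_dens_empty [simp]: "bern_dens r p {} = 1 - r"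
  by (simp add: bern_dens_def)

lemma bern_dens_singleton [simp]: "bern_dens r p {x} = r * p x"
  by (simp add: bern_dens_def)

lemma bern_dens_0: "T \<noteq> {} \<Longrightarrow> bern_dens 0 p T = 0"
  by (simp add: bern_dens_def)

lemma bern_dens_not_subsingleton:
  assumes "finite T" and "\<not> subsingleton T"
  shows "bern_dens r p T = 0"
proof -
  obtain x y where "x \<in> T" "y \<in> T" "x \<noteq> y"
    using assms(2) unfolding subsingleton_def by blast
  then have "T \<noteq> {}" and "card T \<noteq> 1"
    by (auto simp: card_1_singleton_iff)
  then show ?thesis by (simp add: bern_dens_def)
qed

lemma bern_dens_missed_detection_update:
  fixes l r :: real
  assumes "0 < l" and "0 \<le> r" and "r \<le> 1"
  defines "d \<equiv> 1 - r + r * l"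
  shows "0 < d"
    and "d * bern_dens (r * l / d) (\<lambda>x. q x * p x / l) {} = bern_dens r p {}"
    and "d * bern_dens (r * l / d) (\<lambda>x. q x * p x / l) {x} = bern_dens r p {x} * q x"
proof -
  show d: "0 < d"
  proof (cases "r = 1")
    case False
    then show ?thesis using assms by (simp add: d_def add_pos_nonneg)
  qed (use assms in \<open>simp add: d_def\<close>)
  have "d * (1 - r * l / d) = d - r * l"
    using d by (simp add: field_simps)
  then show "d * bern_dens (r * l / d) (\<lambda>x. q x * p x / l) {} = bern_dens r p {}"
    by (simp add: d_def)
  show "d * bern_dens (r * l / d) (\<lambda>x. q x * p x / l) {x} = bern_dens r p {x} * q x"
    using d \<open>0 < l\<close> by (simp add: field_simps)
qed

lemma bern_dens_detection_update:
  fixes l :: real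
  assumes "0 < l"
  shows "r * l * bern_dens 1 (\<lambda>x. q x * p x / l) {x} = bern_dens r p {x} * q x"
  using assms by simp

lemma bern_dens_birth_update:
  fixes c l :: real
  assumes "0 < l" and "0 \<le> c"
  shows "(c + l) * bern_dens (l / (c + l)) (\<lambda>x. q x * p x / l) {} = c"
    and "(c + l) * bern_dens (l / (c + l)) (\<lambda>x. q x * p x / l) {y} = q y * p y"
proof -
  have "0 < c + l" using assms by simp
  show "(c + l) * bern_dens (l / (c + l)) (\<lambda>x. q x * p x / l) {} = c"
    using \<open>0 < c + l\<close> by (simp add: field_simps)
  show "(c + l) * bern_dens (l / (c + l)) (\<lambda>x. q x * p x / l) {y} = q y * p y"
    using \<open>0 < c + l\<close> assms(1) by (simp add: mult.assoc[symmetric])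
qed

lemma disjoint_family_on_cong:
  "(\<And>i. i \<in> I \<Longrightarrow> A i = B i) \<Longrightarrow> disjoint_family_on A I \<longleftrightarrow> disjoint_family_on B I"
  by (simp add: disjoint_family_on_def)

lemma disjoint_family_on_Un_iff:
  assumes "\<And>c. c \<in> I \<Longrightarrow> A c \<subseteq> P" and "\<And>c. c \<in> I \<Longrightarrow> B c \<subseteq> Q" and "P \<inter> Q = {}"
  shows "disjoint_family_on (\<lambda>c. A c \<union> B c) I \<longleftrightarrow> disjoint_family_on A I \<and> disjoint_family_on B I"
proof -
  have "(A c \<union> B c) \<inter> (A d \<union> B d) = (A c \<inter> A d) \<union> (B c \<inter> B d)" if "c \<in> I" "d \<in> I" for c d
    using assms that by blast
  then show ?thesis
    unfolding disjoint_family_on_def by (simp add: Un_empty ball_conj_distrib imp_conjR)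
qed

lemma UN_Un_eq_Un_iff:
  assumes "\<And>c. c \<in> I \<Longrightarrow> A c \<subseteq> P" and "\<And>c. c \<in> I \<Longrightarrow> B c \<subseteq> Q" and "P \<inter> Q = {}"
  shows "(\<Union>c\<in>I. A c \<union> B c) = P \<union> Q \<longleftrightarrow> (\<Union>c\<in>I. A c) = P \<and> (\<Union>c\<in>I. B c) = Q"
proof -
  have "(\<Union>c\<in>I. A c \<union> B c) = (\<Union>c\<in>I. A c) \<union> (\<Union>c\<in>I. B c)" by blast
  moreover have "(\<Union>c\<in>I. A c) \<subseteq> P" "(\<Union>c\<in>I. B c) \<subseteq> Q" using assms(1,2) by blast+
  ultimately show ?thesis using assms(3) by blast
qed

lemma decomps_iff:
  "Xs \<in> decomps n X \<longleftrightarrow>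
     Xs \<in> Pi\<^sub>E {1..n} (\<lambda>_. Pow X) \<and> (\<Union>i\<in>{1..n}. Xs i) = X \<and> disjoint_family_on Xs {1..n}"
  by (simp add: decomps_def disjoint_family_on_def)

lemma glob_hyps_iff:
  "a \<in> glob_hyps n h M Mall \<longleftrightarrow>
     a \<in> Pi\<^sub>E {1..n} (\<lambda>i. {1..h i}) \<and> (\<Union>i\<in>{1..n}. M i (a i)) = Mall \<and>
     disjoint_family_on (\<lambda>i. M i (a i)) {1..n}"
  by (simp add: glob_hyps_def disjoint_family_on_def)

lemma finite_decomps: "finite X \<Longrightarrow> finite (decomps n X)"
  by (rule finite_subset[of _ "Pi\<^sub>E {1..n} (\<lambda>_. Pow X)"])
    (auto simp: decomps_def intro!: finite_PiE)

lemma finite_glob_hyps: "finite (glob_hyps n h M Mall)"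
  by (rule finite_subset[of _ "Pi\<^sub>E {1..n} (\<lambda>i. {1..h i})"])
    (auto simp: glob_hyps_def intro!: finite_PiE)

definition assocs :: "'x set \<Rightarrow> 'z set \<Rightarrow> ('x \<Rightarrow> 'z set) set" where
  "assocs X Z = {Zs \<in> Pi\<^sub>E X (\<lambda>_. Pow Z). disjoint_family_on Zs X}"

lemma finite_assocs: "finite X \<Longrightarrow> finite Z \<Longrightarrow> finite (assocs X Z)"
  by (rule finite_subset[of _ "Pi\<^sub>E X (\<lambda>_. Pow Z)"]) (auto simp: assocs_def intro!: finite_PiE)

lemma meas_lik_eq_sum_assocs:
  "meas_lik lamC g Z X =
     (\<Sum>Zs\<in>assocs X Z. exp (- (\<integral>z. lamC z \<partial>lborel)) * (\<Prod>z\<in>Z - (\<Union>x\<in>X. Zs x). lamC z) *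
        (\<Prod>x\<in>X. g (Zs x) x))"
  by (simp add: meas_lik_def assocs_def disjoint_family_on_def)

lemma mod_div_encode:
  fixes b H j :: nat
  assumes "b \<in> {1..H}"
  shows "(b + H * j - 1) mod H + 1 = b" and "(b + H * j - 1) div H = j"
proof -
  obtain b0 where b0: "b = Suc b0" and lt: "b0 < H" using assms by (cases b) auto
  then show "(b + H * j - 1) mod H + 1 = b" "(b + H * j - 1) div H = j" by simp_all
qed

lemma mod_div_decode:
  fixes x H L :: nat
  assumes "x \<in> {1..L * H}"
  shows "(x - 1) mod H + 1 \<in> {1..H}" and "(x - 1) div H < L"
    and "x = ((x - 1) mod H + 1) + H * ((x - 1) div H)"
proof -
  have H: "0 < H" using assms by (cases "H = 0") auto
  show "(x - 1) mod H + 1 \<in> {1..H}" using mod_less_divisor[OF H, of "x - 1"] by simp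
  show "(x - 1) div H < L" using assms H by (auto simp: div_less_iff_less_mult)
  show "x = ((x - 1) mod H + 1) + H * ((x - 1) div H)"
    using assms mod_mult_div_eq[of "x - 1" H] by auto
qed

lemma sum_Sigma_eq:
  "finite A \<Longrightarrow> (\<And>x. x \<in> A \<Longrightarrow> finite (B x)) \<Longrightarrow>
    sum F (Sigma A B) = (\<Sum>x\<in>A. \<Sum>y\<in>B x. F (x, y))"
  by (subst sum.Sigma) (auto simp: case_prod_beta')

section \<open>Measurement subsets and local hypotheses\<close>

locale pmbm_update =
  fixes lamC :: "'z::euclidean_space \<Rightarrow> real"
    and g :: "'z set \<Rightarrow> 'x \<Rightarrow> real"
    and mu :: "'x measure" and lam :: "'x \<Rightarrow> real"
    and k :: nat and mc :: "nat \<Rightarrow> nat"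
    and zs :: "nat \<Rightarrow> 'z"
    and sub :: "nat \<Rightarrow> 'z set"
    and n :: nat and h :: "nat \<Rightarrow> nat"
    and w r :: "nat \<Rightarrow> nat \<Rightarrow> real"
    and f :: "nat \<Rightarrow> nat \<Rightarrow> 'x \<Rightarrow> real"
    and M :: "nat \<Rightarrow> nat \<Rightarrow> (nat \<times> nat) set"
    and n' :: nat and lam' :: "'x \<Rightarrow> real" and h' :: "nat \<Rightarrow> nat"
    and w' r' :: "nat \<Rightarrow> nat \<Rightarrow> real"
    and f' :: "nat \<Rightarrow> nat \<Rightarrow> 'x \<Rightarrow> real"
    and M' :: "nat \<Rightarrow> nat \<Rightarrow> (nat \<times> nat) set"
  assumes lamC_nonneg: "\<forall>z. lamC z \<ge> 0"
    and k_pos: "k \<ge> 1"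
    and sub_bij: "bij_betw sub {1..2 ^ mc k - 1} {S. S \<subseteq> zs ` {1..mc k} \<and> S \<noteq> {}}"
    and M_sub: "\<forall>i\<in>{1..n}. \<forall>a\<in>{1..h i}. M i a \<subseteq> meas_pairs mc (k - 1)"
    and w_nonneg: "\<forall>i\<in>{1..n}. \<forall>a\<in>{1..h i}. w i a \<ge> 0"
    and r_range: "\<forall>i\<in>{1..n}. \<forall>a\<in>{1..h i}. 0 \<le> r i a \<and> r i a \<le> 1"
    and w_norm: "(\<Sum>a\<in>glob_hyps n h M (meas_pairs mc (k - 1)). \<Prod>i\<in>{1..n}. w i (a i)) > 0"
    and l_miss_pos: "\<forall>i\<in>{1..n}. \<forall>a\<in>{1..h i}. (\<integral>x. f i a x * g {} x \<partial>mu) > 0"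
    and l_det_pos: "\<forall>i\<in>{1..n}. \<forall>a\<in>{1..h i}. \<forall>j\<in>{1..2 ^ mc k - 1}.
                      (\<integral>x. f i a x * g (sub j) x \<partial>mu) > 0"
    and l_new_pos: "\<forall>j\<in>{1..2 ^ mc k - 1}. (\<integral>x. lam x * g (sub j) x \<partial>mu) > 0"
    and upd_n: "n' = n + 2 ^ mc k - 1"
    and upd_lam: "\<forall>x. lam' x = g {} x * lam x"
    and upd_h_old: "\<forall>i\<in>{1..n}. h' i = 2 ^ mc k * h i"
    and upd_miss: "\<forall>i\<in>{1..n}. \<forall>a\<in>{1..h i}.
        M' i a = M i a \<and>
        w' i a = w i a * (1 - r i a + r i a * (\<integral>x. f i a x * g {} x \<partial>mu)) \<and>
        r' i a = r i a * (\<integral>x. f i a x * g {} x \<partial>mu)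
                 / (1 - r i a + r i a * (\<integral>x. f i a x * g {} x \<partial>mu)) \<and>
        (\<forall>x. f' i a x = g {} x * f i a x / (\<integral>x. f i a x * g {} x \<partial>mu))"
    and upd_det: "\<forall>i\<in>{1..n}. \<forall>b\<in>{1..h i}. \<forall>j\<in>{1..2 ^ mc k - 1}.
        r' i (b + h i * j) = 1 \<and>
        M' i (b + h i * j) = M i b \<union> {(k, p) | p. p \<in> {1..mc k} \<and> zs p \<in> sub j} \<and>
        w' i (b + h i * j) = w i b * r i b * (\<integral>x. f i b x * g (sub j) x \<partial>mu) \<and>
        (\<forall>x. f' i (b + h i * j) x = g (sub j) x * f i b x / (\<integral>x. f i b x * g (sub j) x \<partial>mu))"
    and upd_new: "\<forall>j\<in>{1..2 ^ mc k - 1}.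
        h' (n + j) = 2 \<and>
        M' (n + j) 1 = {} \<and> w' (n + j) 1 = 1 \<and> r' (n + j) 1 = 0 \<and>
        M' (n + j) 2 = {(k, p) | p. p \<in> {1..mc k} \<and> zs p \<in> sub j} \<and>
        w' (n + j) 2 = (if card (sub j) = 1 then \<Prod>z\<in>sub j. lamC z else 0)
                       + (\<integral>x. lam x * g (sub j) x \<partial>mu) \<and>
        r' (n + j) 2 = (\<integral>x. lam x * g (sub j) x \<partial>mu) / w' (n + j) 2 \<and>
        (\<forall>x. f' (n + j) 2 x = g (sub j) x * lam x / (\<integral>x. lam x * g (sub j) x \<partial>mu))"
begin

definition "Zk = zs ` {1..mc k}"
definition nsub :: nat where "nsub = 2 ^ mc k - 1"
(* The subset Z\<^sup>j of the current measurements; Z\<^sup>0 = {} stands for a missed detection. *)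
definition "meas_subset j = (if j = 0 then {} else sub j)"
definition "subset_index = inv_into {..nsub} meas_subset"
definition "new_pairs T = {(k, p) | p. p \<in> {1..mc k} \<and> zs p \<in> T}"
definition "Mprev = meas_pairs mc (k - 1)"
definition "Mcur = meas_pairs mc k"
definition "hyps = glob_hyps n h M Mprev"
definition "hyps' = glob_hyps n' h' M' Mcur"

lemma finite_Zk: "finite Zk"
  by (simp add: Zk_def)

lemma n'_eq: "n' = n + nsub"
  using upd_n by (simp add: nsub_def)

lemma meas_subset_0 [simp]: "meas_subset 0 = {}"
  by (simp add: meas_subset_def)

lemma meas_subset_pos: "j \<in> {1..nsub} \<Longrightarrow> meas_subset j = sub j"
  by (simp add: meas_subset_def)

lemma meas_subset_bij: "bij_betw meas_subset {..nsub} (Pow Zk)"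
proof -
  have "bij_betw meas_subset {1..nsub} {T. T \<subseteq> Zk \<and> T \<noteq> {}}"
    using sub_bij unfolding nsub_def Zk_def by (subst bij_betw_cong[where g = sub]) (auto simp: meas_subset_def)
  then have "bij_betw meas_subset ({1..nsub} \<union> {0}) ({T. T \<subseteq> Zk \<and> T \<noteq> {}} \<union> {meas_subset 0})"
    by (intro notIn_Un_bij_betw) auto
  moreover have "{1..nsub} \<union> {0} = {..nsub}" and "{T. T \<subseteq> Zk \<and> T \<noteq> {}} \<union> {meas_subset 0} = Pow Zk"
    by auto
  ultimately show ?thesis by simp
qed

lemma meas_subset_subset: "j \<le> nsub \<Longrightarrow> meas_subset j \<subseteq> Zk"
  using bij_betw_apply[OF meas_subset_bij] by simp

lemma meas_subset_nonempty: "j \<in> {1..nsub} \<Longrightarrow> meas_subset j \<noteq> {}"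
  using bij_betw_apply[OF sub_bij] by (simp add: meas_subset_pos nsub_def)

lemma meas_subset_inj: "i \<le> nsub \<Longrightarrow> j \<le> nsub \<Longrightarrow> meas_subset i = meas_subset j \<Longrightarrow> i = j"
  using bij_betw_imp_inj_on[OF meas_subset_bij] by (simp add: inj_on_def)

lemma meas_subset_index: "T \<subseteq> Zk \<Longrightarrow> meas_subset (subset_index T) = T"
  unfolding subset_index_def using bij_betw_inv_into_right[OF meas_subset_bij] by simp

lemma subset_index_meas_subset: "j \<le> nsub \<Longrightarrow> subset_index (meas_subset j) = j"
  unfolding subset_index_def using bij_betw_inv_into_left[OF meas_subset_bij] by simp

lemma subset_index_le: "T \<subseteq> Zk \<Longrightarrow> subset_index T \<le> nsub"
  unfolding subset_index_def using bij_betw_apply[OF bij_betw_inv_into[OF meas_subset_bij]] by simp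

lemma subset_index_empty [simp]: "subset_index {} = 0"
  using subset_index_meas_subset[of 0] by simp

lemma subset_index_pos: "T \<subseteq> Zk \<Longrightarrow> T \<noteq> {} \<Longrightarrow> subset_index T \<in> {1..nsub}"
  using subset_index_le[of T] meas_subset_index[of T] by (cases "subset_index T = 0") auto

lemma new_pairs_empty [simp]: "new_pairs {} = {}"
  by (simp add: new_pairs_def)

lemma new_pairs_UN: "new_pairs (\<Union>c\<in>I. D c) = (\<Union>c\<in>I. new_pairs (D c))"
  by (auto simp: new_pairs_def)

lemma new_pairs_Int: "new_pairs (A \<inter> B) = new_pairs A \<inter> new_pairs B"
  by (auto simp: new_pairs_def)

lemma new_pairs_mono_iff: "A \<subseteq> Zk \<Longrightarrow> new_pairs A \<subseteq> new_pairs B \<longleftrightarrow> A \<subseteq> B"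
  by (auto simp: new_pairs_def Zk_def subset_iff)

lemma new_pairs_eq_iff: "A \<subseteq> Zk \<Longrightarrow> B \<subseteq> Zk \<Longrightarrow> new_pairs A = new_pairs B \<longleftrightarrow> A = B"
  using new_pairs_mono_iff[of A B] new_pairs_mono_iff[of B A] by auto

lemma Mcur_eq: "Mcur = Mprev \<union> new_pairs Zk"
proof (rule set_eqI)
  fix x :: "nat \<times> nat"
  obtain t p where x: "x = (t, p)" by (cases x)
  show "x \<in> Mcur \<longleftrightarrow> x \<in> Mprev \<union> new_pairs Zk"
    unfolding x using k_pos
    by (cases "t = k") (auto simp: Mcur_def Mprev_def new_pairs_def Zk_def meas_pairs_def)
qed

lemma Mprev_Int_new_pairs: "Mprev \<inter> new_pairs Zk = {}"
  using k_pos by (auto simp: Mprev_def new_pairs_def meas_pairs_def)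

lemma UN_new_pairs_eq_iff:
  assumes "\<And>c. c \<in> I \<Longrightarrow> D c \<subseteq> Zk"
  shows "(\<Union>c\<in>I. new_pairs (D c)) = new_pairs Zk \<longleftrightarrow> (\<Union>c\<in>I. D c) = Zk"
  unfolding new_pairs_UN[symmetric] using assms by (intro new_pairs_eq_iff) auto

lemma disjoint_family_on_new_pairs_iff:
  assumes "\<And>c. c \<in> I \<Longrightarrow> D c \<subseteq> Zk"
  shows "disjoint_family_on (\<lambda>c. new_pairs (D c)) I \<longleftrightarrow> disjoint_family_on D I"
proof -
  have "new_pairs (D c) \<inter> new_pairs (D d) = {} \<longleftrightarrow> D c \<inter> D d = {}" if "c \<in> I" "d \<in> I" for c d
    using assms that new_pairs_eq_iff[of "D c \<inter> D d" "{}"] by (auto simp: new_pairs_Int)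
  then show ?thesis unfolding disjoint_family_on_def by blast
qed

(* Local hypothesis b + h i * j of a previous Bernoulli i updates its predicted hypothesis b with
   the measurement set Z\<^sup>j; prev_hyp and assoc_index decode it. *)
definition "prev_hyp i x = (x - 1) mod h i + 1"
definition "assoc_index i x = (x - 1) div h i"

definition "hyp_meas c x =
  (if c \<le> n then meas_subset (assoc_index c x) else if x = 2 then meas_subset (c - n) else {})"
definition "hyp_prev_pairs c x = (if c \<le> n then M c (prev_hyp c x) else {})"

lemma bernoulli_index_cases:
  assumes "c \<in> {1..n'}"
  obtains (old) "c \<in> {1..n}" | (new) j where "j \<in> {1..nsub}" and "c = n + j"
proof (cases "c \<le> n")
  case True
  then show ?thesis using assms by (intro old) auto
next
  case False
  then show ?thesis using assms n'_eq by (intro new[of "c - n"]) auto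
qed

lemma old_index_in_range: "i \<in> {1..n} \<Longrightarrow> i \<in> {1..n'}"
  using n'_eq by auto

lemma new_index_in_range: "j \<in> {1..nsub} \<Longrightarrow> n + j \<in> {1..n'}"
  using n'_eq by auto

lemma h'_old: "i \<in> {1..n} \<Longrightarrow> h' i = Suc nsub * h i"
  using upd_h_old by (simp add: nsub_def)

lemma h'_new: "j \<in> {1..nsub} \<Longrightarrow> h' (n + j) = 2"
  using upd_new by (simp add: nsub_def)

lemma prev_hyp_encode: "b \<in> {1..h i} \<Longrightarrow> prev_hyp i (b + h i * j) = b"
  unfolding prev_hyp_def by (rule mod_div_encode)

lemma assoc_index_encode: "b \<in> {1..h i} \<Longrightarrow> assoc_index i (b + h i * j) = j"
  unfolding assoc_index_def by (rule mod_div_encode)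

lemma old_hyp_decode:
  assumes "i \<in> {1..n}" and "x \<in> {1..h' i}"
  shows "prev_hyp i x \<in> {1..h i}" and "assoc_index i x \<le> nsub"
    and "x = prev_hyp i x + h i * assoc_index i x"
proof -
  have x: "x \<in> {1..Suc nsub * h i}" using assms h'_old by simp
  show "prev_hyp i x \<in> {1..h i}"
    unfolding prev_hyp_def by (rule mod_div_decode(1)[OF x])
  show "assoc_index i x \<le> nsub"
    unfolding assoc_index_def using mod_div_decode(2)[OF x] by simp
  show "x = prev_hyp i x + h i * assoc_index i x"
    unfolding prev_hyp_def assoc_index_def by (rule mod_div_decode(3)[OF x])
qed

lemma old_hyp_encode_range:
  assumes "i \<in> {1..n}" and "b \<in> {1..h i}" and "j \<le> nsub"
  shows "b + h i * j \<in> {1..h' i}"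
proof -
  have "h i * j \<le> h i * nsub" using assms(3) by simp
  moreover have "h' i = h i + h i * nsub" using h'_old[OF assms(1)] by simp
  ultimately show ?thesis using assms(2) by (simp only: atLeastAtMost_iff) linarith
qed

lemma M'_old:
  assumes "i \<in> {1..n}" and "b \<in> {1..h i}" and "j \<le> nsub"
  shows "M' i (b + h i * j) = M i b \<union> new_pairs (meas_subset j)"
proof (cases "j = 0")
  case False
  then have "j \<in> {1..2 ^ mc k - 1}" using assms(3) by (simp add: nsub_def)
  then show ?thesis
    using upd_det assms(1,2) False by (simp add: new_pairs_def meas_subset_def)
qed (use upd_miss assms in simp)

lemma M'_new:
  assumes "j \<in> {1..nsub}"
  shows "M' (n + j) 1 = {}" and "M' (n + j) 2 = new_pairs (meas_subset j)"
  using upd_new assms by (simp_all add: nsub_def new_pairs_def meas_subset_pos)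

lemma M'_split:
  assumes "c \<in> {1..n'}" and "x \<in> {1..h' c}"
  shows "M' c x = hyp_prev_pairs c x \<union> new_pairs (hyp_meas c x) \<and>
    hyp_prev_pairs c x \<subseteq> Mprev \<and> hyp_meas c x \<subseteq> Zk"
  using assms(1)
proof (cases rule: bernoulli_index_cases)
  case old
  note decode = old_hyp_decode[OF old assms(2)]
  have "M' c x = M c (prev_hyp c x) \<union> new_pairs (meas_subset (assoc_index c x))"
    using M'_old[OF old decode(1,2)] decode(3) by simp
  then show ?thesis
    using M_sub old decode(1,2) meas_subset_subset
    by (simp add: hyp_prev_pairs_def hyp_meas_def Mprev_def)
next
  case (new j)
  then have "x = 1 \<or> x = 2" using assms(2) h'_new by auto
  then show ?thesis
    using new M'_new meas_subset_subset[of j] by (auto simp: hyp_prev_pairs_def hyp_meas_def)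
qed

lemma hyps'_iff_partitions:
  assumes a': "a' \<in> Pi\<^sub>E {1..n'} (\<lambda>c. {1..h' c})"
  shows "a' \<in> hyps' \<longleftrightarrow>
    (\<Union>c\<in>{1..n'}. hyp_prev_pairs c (a' c)) = Mprev \<and>
    disjoint_family_on (\<lambda>c. hyp_prev_pairs c (a' c)) {1..n'} \<and>
    (\<Union>c\<in>{1..n'}. hyp_meas c (a' c)) = Zk \<and> disjoint_family_on (\<lambda>c. hyp_meas c (a' c)) {1..n'}"
proof -
  let ?P = "\<lambda>c. hyp_prev_pairs c (a' c)" and ?D = "\<lambda>c. hyp_meas c (a' c)"
  have a'c: "c \<in> {1..n'} \<Longrightarrow> a' c \<in> {1..h' c}" for c using a' by auto
  have M'_eq: "c \<in> {1..n'} \<Longrightarrow> M' c (a' c) = ?P c \<union> new_pairs (?D c)"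
    and P_sub: "c \<in> {1..n'} \<Longrightarrow> ?P c \<subseteq> Mprev"
    and D_sub: "c \<in> {1..n'} \<Longrightarrow> ?D c \<subseteq> Zk" for c
    using M'_split[OF _ a'c] by blast+
  have ND_sub: "c \<in> {1..n'} \<Longrightarrow> new_pairs (?D c) \<subseteq> new_pairs Zk" for c
    using D_sub new_pairs_mono_iff by blast
  have "a' \<in> hyps' \<longleftrightarrow> (\<Union>c\<in>{1..n'}. ?P c \<union> new_pairs (?D c)) = Mprev \<union> new_pairs Zk \<and>
      disjoint_family_on (\<lambda>c. ?P c \<union> new_pairs (?D c)) {1..n'}"
  proof -
    have U: "(\<Union>c\<in>{1..n'}. M' c (a' c)) = (\<Union>c\<in>{1..n'}. ?P c \<union> new_pairs (?D c))"
      using M'_eq by simp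
    have D: "disjoint_family_on (\<lambda>c. M' c (a' c)) {1..n'} \<longleftrightarrow>
        disjoint_family_on (\<lambda>c. ?P c \<union> new_pairs (?D c)) {1..n'}"
      by (rule disjoint_family_on_cong) (rule M'_eq)
    have "a' \<in> hyps' \<longleftrightarrow>
        (\<Union>c\<in>{1..n'}. M' c (a' c)) = Mcur \<and> disjoint_family_on (\<lambda>c. M' c (a' c)) {1..n'}"
      using a' by (simp add: hyps'_def glob_hyps_iff)
    then show ?thesis by (simp only: U D Mcur_eq)
  qed
  also have "\<dots> \<longleftrightarrow> (\<Union>c\<in>{1..n'}. ?P c) = Mprev \<and> disjoint_family_on ?P {1..n'} \<and>
      (\<Union>c\<in>{1..n'}. ?D c) = Zk \<and> disjoint_family_on ?D {1..n'}"
  proof -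
    have "(\<Union>c\<in>{1..n'}. ?P c \<union> new_pairs (?D c)) = Mprev \<union> new_pairs Zk \<longleftrightarrow>
        (\<Union>c\<in>{1..n'}. ?P c) = Mprev \<and> (\<Union>c\<in>{1..n'}. new_pairs (?D c)) = new_pairs Zk"
      by (rule UN_Un_eq_Un_iff) (simp_all add: P_sub ND_sub Mprev_Int_new_pairs)
    moreover have "disjoint_family_on (\<lambda>c. ?P c \<union> new_pairs (?D c)) {1..n'} \<longleftrightarrow>
        disjoint_family_on ?P {1..n'} \<and> disjoint_family_on (\<lambda>c. new_pairs (?D c)) {1..n'}"
      by (rule disjoint_family_on_Un_iff[where P = Mprev and Q = "new_pairs Zk"])
        (simp_all add: P_sub ND_sub Mprev_Int_new_pairs)
    moreover have "(\<Union>c\<in>{1..n'}. new_pairs (?D c)) = new_pairs Zk \<longleftrightarrow> (\<Union>c\<in>{1..n'}. ?D c) = Zk"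
      by (rule UN_new_pairs_eq_iff) (simp add: D_sub)
    moreover have "disjoint_family_on (\<lambda>c. new_pairs (?D c)) {1..n'} \<longleftrightarrow> disjoint_family_on ?D {1..n'}"
      by (rule disjoint_family_on_new_pairs_iff) (simp add: D_sub)
    ultimately show ?thesis by argo
  qed
  finally show ?thesis .
qed

lemma prev_pairs_partition_iff:
  assumes a': "a' \<in> Pi\<^sub>E {1..n'} (\<lambda>c. {1..h' c})"
  shows "(\<Union>c\<in>{1..n'}. hyp_prev_pairs c (a' c)) = Mprev \<and>
      disjoint_family_on (\<lambda>c. hyp_prev_pairs c (a' c)) {1..n'} \<longleftrightarrow>
    restrict (\<lambda>i. prev_hyp i (a' i)) {1..n} \<in> hyps"
proof -
  let ?P = "\<lambda>c. hyp_prev_pairs c (a' c)" and ?b = "restrict (\<lambda>i. prev_hyp i (a' i)) {1..n}"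
  have "prev_hyp i (a' i) \<in> {1..h i}" if "i \<in> {1..n}" for i
    using old_hyp_decode(1)[OF that PiE_mem[OF a' old_index_in_range[OF that]]] .
  then have "?b \<in> Pi\<^sub>E {1..n} (\<lambda>i. {1..h i})" by auto
  moreover have "(\<Union>c\<in>{1..n'}. ?P c) = Mprev \<longleftrightarrow> (\<Union>i\<in>{1..n}. M i (?b i)) = Mprev"
  proof -
    have "(\<Union>c\<in>{1..n'}. ?P c) = (\<Union>i\<in>{1..n}. M i (?b i))"
      using n'_eq by (force simp: hyp_prev_pairs_def split: if_splits)
    then show ?thesis by simp
  qed
  moreover have "disjoint_family_on ?P {1..n'} \<longleftrightarrow> disjoint_family_on ?P {1..n}"
  proof
    show "disjoint_family_on ?P {1..n'} \<Longrightarrow> disjoint_family_on ?P {1..n}"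
      using n'_eq by (elim disjoint_family_on_mono[rotated]) auto
    show "disjoint_family_on ?P {1..n'}" if "disjoint_family_on ?P {1..n}"
      using that unfolding disjoint_family_on_def
      by (metis atLeastAtMost_iff hyp_prev_pairs_def inf_bot_left inf_bot_right)
  qed
  moreover have "disjoint_family_on ?P {1..n} \<longleftrightarrow> disjoint_family_on (\<lambda>i. M i (?b i)) {1..n}"
    by (rule disjoint_family_on_cong) (simp add: hyp_prev_pairs_def)
  ultimately show ?thesis unfolding hyps_def glob_hyps_iff by argo
qed

lemma hyps'_iff:
  assumes "a' \<in> Pi\<^sub>E {1..n'} (\<lambda>c. {1..h' c})"
  shows "a' \<in> hyps' \<longleftrightarrow>
    restrict (\<lambda>i. prev_hyp i (a' i)) {1..n} \<in> hyps \<and>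
    (\<Union>c\<in>{1..n'}. hyp_meas c (a' c)) = Zk \<and> disjoint_family_on (\<lambda>c. hyp_meas c (a' c)) {1..n'}"
  using hyps'_iff_partitions[OF assms] prev_pairs_partition_iff[OF assms] by argo

lemma missed_update:
  assumes "i \<in> {1..n}" and "b \<in> {1..h i}"
  defines "l \<equiv> \<integral>x. f i b x * g {} x \<partial>mu"
  shows "w' i b = w i b * (1 - r i b + r i b * l)" and "0 < 1 - r i b + r i b * l"
    and "w' i b * bern_dens (r' i b) (f' i b) {} = w i b * bern_dens (r i b) (f i b) {}"
    and "w' i b * bern_dens (r' i b) (f' i b) {x} = w i b * bern_dens (r i b) (f i b) {x} * g {} x"
proof -
  have l: "0 < l" and r: "0 \<le> r i b" "r i b \<le> 1"
    using l_miss_pos r_range assms(1,2) by (auto simp: l_def)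
  have r': "r' i b = r i b * l / (1 - r i b + r i b * l)"
    and f': "f' i b = (\<lambda>x. g {} x * f i b x / l)"
    using upd_miss assms(1,2) by (auto simp: l_def)
  show w': "w' i b = w i b * (1 - r i b + r i b * l)"
    using upd_miss assms(1,2) by (simp add: l_def)
  note upd = bern_dens_missed_detection_update[OF l r]
  show "0 < 1 - r i b + r i b * l" by (fact upd(1))
  show "w' i b * bern_dens (r' i b) (f' i b) {} = w i b * bern_dens (r i b) (f i b) {}"
    using upd(2)[where q = "g {}" and p = "f i b"] unfolding w' r' f' by (simp add: mult.assoc)
  show "w' i b * bern_dens (r' i b) (f' i b) {x} = w i b * bern_dens (r i b) (f i b) {x} * g {} x"
    using upd(3)[where q = "g {}" and p = "f i b"] unfolding w' r' f' by (simp add: mult.assoc)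
qed

lemma detection_update:
  assumes "i \<in> {1..n}" and "b \<in> {1..h i}" and "j \<in> {1..nsub}"
  defines "l \<equiv> \<integral>x. f i b x * g (sub j) x \<partial>mu"
  shows "w' i (b + h i * j) = w i b * r i b * l" and "0 < l"
    and "bern_dens (r' i (b + h i * j)) p {} = 0"
    and "w' i (b + h i * j) * bern_dens (r' i (b + h i * j)) (f' i (b + h i * j)) {x} =
      w i b * bern_dens (r i b) (f i b) {x} * g (meas_subset j) x"
proof -
  have j: "j \<in> {1..2 ^ mc k - 1}" using assms(3) by (simp add: nsub_def)
  show l: "0 < l" using l_det_pos assms(1,2) j by (simp add: l_def)
  have r': "r' i (b + h i * j) = 1" and f': "f' i (b + h i * j) = (\<lambda>x. g (sub j) x * f i b x / l)"
    using upd_det assms(1,2) j by (auto simp: l_def)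
  show w': "w' i (b + h i * j) = w i b * r i b * l"
    using upd_det assms(1,2) j by (simp add: l_def)
  show "bern_dens (r' i (b + h i * j)) p {} = 0" by (simp add: r')
  show "w' i (b + h i * j) * bern_dens (r' i (b + h i * j)) (f' i (b + h i * j)) {x} =
      w i b * bern_dens (r i b) (f i b) {x} * g (meas_subset j) x"
    using bern_dens_detection_update[OF l, of "r i b" "g (sub j)" "f i b" x] assms(3) l
    unfolding w' r' f' by (simp add: meas_subset_pos mult.assoc)
qed

lemma old_factor_singleton:
  assumes "i \<in> {1..n}" and "b \<in> {1..h i}" and "j \<le> nsub"
  shows "w' i (b + h i * j) * bern_dens (r' i (b + h i * j)) (f' i (b + h i * j)) {x} =
    w i b * bern_dens (r i b) (f i b) {x} * g (meas_subset j) x"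
  using assms missed_update(4) detection_update(4) by (cases "j = 0") auto

lemma birth_update:
  assumes "j \<in> {1..nsub}"
  defines "l \<equiv> \<integral>x. lam x * g (sub j) x \<partial>mu"
    and "c \<equiv> if card (meas_subset j) = 1 then \<Prod>z\<in>meas_subset j. lamC z else 0"
  shows "w' (n + j) 1 = 1" and "w' (n + j) 1 * bern_dens (r' (n + j) 1) p {} = 1"
    and "T \<noteq> {} \<Longrightarrow> bern_dens (r' (n + j) 1) p T = 0"
    and "w' (n + j) 2 = c + l" and "0 < l" and "0 \<le> c"
    and "w' (n + j) 2 * bern_dens (r' (n + j) 2) (f' (n + j) 2) {} = c"
    and "w' (n + j) 2 * bern_dens (r' (n + j) 2) (f' (n + j) 2) {y} = g (meas_subset j) y * lam y"
proof -
  have j: "j \<in> {1..2 ^ mc k - 1}" and S: "meas_subset j = sub j"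
    using assms(1) by (simp_all add: nsub_def meas_subset_pos)
  show "w' (n + j) 1 = 1" and "w' (n + j) 1 * bern_dens (r' (n + j) 1) p {} = 1"
    and "T \<noteq> {} \<Longrightarrow> bern_dens (r' (n + j) 1) p T = 0"
    using upd_new j by (simp_all add: bern_dens_0)
  show w': "w' (n + j) 2 = c + l"
    using upd_new j by (simp add: c_def l_def S)
  show l: "0 < l" using l_new_pos j by (simp add: l_def)
  show c: "0 \<le> c" using lamC_nonneg by (simp add: c_def prod_nonneg)
  have r': "r' (n + j) 2 = l / (c + l)" and f': "f' (n + j) 2 = (\<lambda>x. g (sub j) x * lam x / l)"
    using upd_new j w' by (auto simp: l_def)
  show "w' (n + j) 2 * bern_dens (r' (n + j) 2) (f' (n + j) 2) {} = c"
    and "w' (n + j) 2 * bern_dens (r' (n + j) 2) (f' (n + j) 2) {y} = g (meas_subset j) y * lam y"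
    using bern_dens_birth_update(1)[OF l c, where q = "g (sub j)" and p = lam]
      bern_dens_birth_update(2)[OF l c, where q = "g (sub j)" and p = lam and y = y]
    unfolding w' r' f' S by simp_all
qed

lemma w'_nonneg:
  assumes "c \<in> {1..n'}" and "x \<in> {1..h' c}"
  shows "0 \<le> w' c x"
  using assms(1)
proof (cases rule: bernoulli_index_cases)
  case old
  note decode = old_hyp_decode[OF old assms(2)]
  define b where "b = prev_hyp c x"
  define j where "j = assoc_index c x"
  have b: "b \<in> {1..h c}" and x: "x = b + h c * j" and w: "0 \<le> w c b" and r: "0 \<le> r c b"
    using decode w_nonneg r_range old by (auto simp: b_def j_def)
  show ?thesis
  proof (cases "j = 0")
    case True
    then show ?thesis using missed_update(1,2)[OF old b] w x by simp
  next
    case False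
    then have j: "j \<in> {1..nsub}" using decode(2) by (simp add: j_def)
    show ?thesis using detection_update(1,2)[OF old b j] w r x by simp
  qed
next
  case (new j)
  then have "x = 1 \<or> x = 2" using assms(2) h'_new by auto
  then show ?thesis using birth_update[OF new(1)] new(2) by auto
qed

section \<open>Expansion into sums of products\<close>

definition "wsum = (\<Sum>a\<in>hyps. \<Prod>i\<in>{1..n}. w i (a i))"
definition "wsum' = (\<Sum>a\<in>hyps'. \<Prod>c\<in>{1..n'}. w' c (a c))"

definition "post_factor c x T = w' c x * bern_dens (r' c x) (f' c x) T"

definition "clutter X Zs = Zk - (\<Union>x\<in>X. Zs x)"

definition "prior_terms X = (SIGMA Y:Pow X. SIGMA a:hyps. SIGMA Xs:decomps n (X - Y). assocs X Zk)"
definition "post_terms X = (SIGMA Y:Pow X. SIGMA a:hyps'. decomps n' (X - Y))"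

definition "prior_term X = (\<lambda>(Y, a, Xs, Zs). (\<Prod>y\<in>Y. lam y) * (\<Prod>i\<in>{1..n}. w i (a i)) *
   (\<Prod>i\<in>{1..n}. bern_dens (r i (a i)) (f i (a i)) (Xs i)) *
   (\<Prod>z\<in>clutter X Zs. lamC z) * (\<Prod>x\<in>X. g (Zs x) x))"
definition "post_term = (\<lambda>(Y, a, Xs). (\<Prod>y\<in>Y. lam' y) * (\<Prod>c\<in>{1..n'}. post_factor c (a c) (Xs c)))"

lemma finite_prior_terms: "finite X \<Longrightarrow> finite (prior_terms X)"
  unfolding prior_terms_def
  by (intro finite_SigmaI finite_decomps finite_assocs)
    (auto simp: hyps_def finite_Zk finite_glob_hyps)

lemma finite_post_terms: "finite X \<Longrightarrow> finite (post_terms X)"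
  unfolding post_terms_def by (intro finite_SigmaI finite_decomps) (auto simp: hyps'_def finite_glob_hyps)

lemma prior_expansion:
  assumes X: "finite X"
  shows "meas_lik lamC g Zk X * pmbm_dens mu lam n h w r f M Mprev X =
    exp (- (\<integral>x. lam x \<partial>mu)) * exp (- (\<integral>z. lamC z \<partial>lborel)) / wsum *
    (\<Sum>p\<in>prior_terms X. prior_term X p)"
proof -
  define K where "K = exp (- (\<integral>x. lam x \<partial>mu)) * exp (- (\<integral>z. lamC z \<partial>lborel)) / wsum"
  define L where "L = meas_lik lamC g Zk X"
  have L: "L = (\<Sum>Zs\<in>assocs X Zk. exp (- (\<integral>z. lamC z \<partial>lborel)) *
      (\<Prod>z\<in>clutter X Zs. lamC z) * (\<Prod>x\<in>X. g (Zs x) x))"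
    unfolding L_def clutter_def by (rule meas_lik_eq_sum_assocs)
  have "L * (ppp_dens mu lam Y * mbm_dens n h w r f M Mprev (X - Y)) =
      (\<Sum>a\<in>hyps. \<Sum>Xs\<in>decomps n (X - Y). \<Sum>Zs\<in>assocs X Zk. K * prior_term X (Y, a, Xs, Zs))" for Y
  proof -
    have "L * (ppp_dens mu lam Y * mbm_dens n h w r f M Mprev (X - Y)) =
        (\<Sum>a\<in>hyps. \<Sum>Xs\<in>decomps n (X - Y). L * (ppp_dens mu lam Y * ((\<Prod>i\<in>{1..n}. w i (a i)) / wsum) *
           (\<Prod>i\<in>{1..n}. bern_dens (r i (a i)) (f i (a i)) (Xs i))))"
      unfolding mbm_dens_def hyps_def[symmetric] wsum_def[symmetric]
      by (simp add: sum_distrib_left mult.assoc)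
    also have "\<dots> = (\<Sum>a\<in>hyps. \<Sum>Xs\<in>decomps n (X - Y). \<Sum>Zs\<in>assocs X Zk. K * prior_term X (Y, a, Xs, Zs))"
      unfolding L sum_distrib_right
      by (intro sum.cong refl) (simp add: prior_term_def K_def ppp_dens_def field_simps)
    finally show ?thesis .
  qed
  then have "L * pmbm_dens mu lam n h w r f M Mprev X =
      (\<Sum>Y\<in>Pow X. \<Sum>a\<in>hyps. \<Sum>Xs\<in>decomps n (X - Y). \<Sum>Zs\<in>assocs X Zk. K * prior_term X (Y, a, Xs, Zs))"
    unfolding pmbm_dens_def by (simp add: sum_distrib_left)
  also have "\<dots> = K * (\<Sum>p\<in>prior_terms X. prior_term X p)"
    using X unfolding prior_terms_def
    by (simp add: sum_Sigma_eq finite_glob_hyps finite_decomps finite_assocs finite_Zk hyps_def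
        sum_distrib_left)
  finally show ?thesis unfolding L_def K_def .
qed

lemma post_expansion:
  assumes X: "finite X"
  shows "pmbm_dens mu lam' n' h' w' r' f' M' Mcur X =
    exp (- (\<integral>x. lam' x \<partial>mu)) / wsum' * (\<Sum>q\<in>post_terms X. post_term q)"
proof -
  define K where "K = exp (- (\<integral>x. lam' x \<partial>mu)) / wsum'"
  have "pmbm_dens mu lam' n' h' w' r' f' M' Mcur X =
      (\<Sum>Y\<in>Pow X. \<Sum>a\<in>hyps'. \<Sum>Xs\<in>decomps n' (X - Y). K * post_term (Y, a, Xs))"
    unfolding pmbm_dens_def mbm_dens_def hyps'_def[symmetric] wsum'_def[symmetric]
    by (simp add: sum_distrib_left post_term_def post_factor_def prod.distrib K_def ppp_dens_def
        field_simps)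
  also have "\<dots> = K * (\<Sum>q\<in>post_terms X. post_term q)"
    using X unfolding post_terms_def
    by (simp add: sum_Sigma_eq finite_glob_hyps finite_decomps hyps'_def sum_distrib_left)
  finally show ?thesis unfolding K_def .
qed

definition "local_admissible c x T \<longleftrightarrow> subsingleton T \<and>
  (if c \<le> n then T = {} \<longrightarrow> assoc_index c x = 0
   else (x = 1 \<longrightarrow> T = {}) \<and> (x = 2 \<and> T = {} \<longrightarrow> card (meas_subset (c - n)) = 1))"

definition "prior_admissible = (\<lambda>(Y, a, Xs, Zs). \<forall>i\<in>{1..n}. subsingleton (Xs i))"
definition "post_admissible = (\<lambda>(Y, a, Xs). \<forall>c\<in>{1..n'}. local_admissible c (a c) (Xs c))"

lemma post_factor_eq_0:
  assumes "c \<in> {1..n'}" and "x \<in> {1..h' c}" and "finite T" and "\<not> local_admissible c x T"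
  shows "post_factor c x T = 0"
proof (cases "subsingleton T")
  case False
  then show ?thesis using assms(3) by (simp add: post_factor_def bern_dens_not_subsingleton)
next
  case True
  show ?thesis
    using assms(1)
  proof (cases rule: bernoulli_index_cases)
    case old
    note decode = old_hyp_decode[OF old assms(2)]
    have "T = {}" and j: "assoc_index c x \<in> {1..nsub}"
      using assms(4) True old decode(2) by (auto simp: local_admissible_def)
    moreover have "bern_dens (r' c x) (f' c x) {} = 0"
      using detection_update(3)[OF old decode(1) j] unfolding decode(3)[symmetric] .
    ultimately show ?thesis by (simp add: post_factor_def)
  next
    case (new j)
    then have "x = 1 \<or> x = 2" using assms(2) h'_new by auto
    then show ?thesis
    proof
      assume "x = 1"
      then have "T \<noteq> {}" using assms(4) True new by (auto simp: local_admissible_def)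
      then show ?thesis
        using birth_update(3)[OF new(1) \<open>T \<noteq> {}\<close>] new \<open>x = 1\<close> by (simp add: post_factor_def)
    next
      assume "x = 2"
      then have "T = {}" and "card (meas_subset j) \<noteq> 1"
        using assms(4) True new by (auto simp: local_admissible_def)
      then show ?thesis using birth_update(7)[OF new(1)] new \<open>x = 2\<close> by (simp add: post_factor_def)
    qed
  qed
qed

lemma prior_term_eq_0:
  assumes "finite X" and "p \<in> prior_terms X" and "\<not> prior_admissible p"
  shows "prior_term X p = 0"
proof -
  obtain Y a Xs Zs where p: "p = (Y, a, Xs, Zs)" by (cases p) auto
  obtain i where i: "i \<in> {1..n}" and Xs_i: "\<not> subsingleton (Xs i)"
    using assms(3) by (auto simp: p prior_admissible_def)
  have "Xs i \<subseteq> X" using assms(2) i by (auto simp: p prior_terms_def decomps_def PiE_iff)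
  then have "bern_dens (r i (a i)) (f i (a i)) (Xs i) = 0"
    using assms(1) Xs_i by (intro bern_dens_not_subsingleton) (auto intro: finite_subset)
  then show ?thesis using i by (auto simp: p prior_term_def intro: prod_zero)
qed

lemma post_term_eq_0:
  assumes "finite X" and "q \<in> post_terms X" and "\<not> post_admissible q"
  shows "post_term q = 0"
proof -
  obtain Y a Xs where q: "q = (Y, a, Xs)" by (cases q) auto
  obtain c where c: "c \<in> {1..n'}" and "\<not> local_admissible c (a c) (Xs c)"
    using assms(3) by (auto simp: q post_admissible_def)
  moreover have "a c \<in> {1..h' c}" and "Xs c \<subseteq> X"
    using assms(2) c by (auto simp: q post_terms_def hyps'_def glob_hyps_def decomps_def PiE_iff)
  ultimately have "post_factor c (a c) (Xs c) = 0"
    using assms(1) by (intro post_factor_eq_0) (auto intro: finite_subset)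
  then show ?thesis using c by (auto simp: q post_term_def intro: prod_zero)
qed

section \<open>Correspondence of the nonvanishing terms\<close>

definition "birth_sets X Y Zs = Zs ` Y \<union> (\<lambda>z. {z}) ` clutter X Zs"

definition "post_hyp X Y a Xs Zs = (\<lambda>c.
  if c \<in> {1..n} then a c + h c * subset_index (\<Union>x\<in>Xs c. Zs x)
  else if c \<in> {n+1..n'} then (if meas_subset (c - n) \<in> birth_sets X Y Zs then 2 else 1)
  else undefined)"

definition "post_assign Y Xs Zs = (\<lambda>c.
  if c \<in> {1..n} then Xs c
  else if c \<in> {n+1..n'} then {y \<in> Y. Zs y = meas_subset (c - n)}
  else undefined)"

definition "to_post X = (\<lambda>(Y, a, Xs, Zs). ({y \<in> Y. Zs y = {}}, post_hyp X Y a Xs Zs, post_assign Y Xs Zs))"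

definition "prior_assoc X a' Xs' =
  restrict (\<lambda>x. \<Union>c\<in>{c \<in> {1..n'}. x \<in> Xs' c}. hyp_meas c (a' c)) X"

definition "prior_poisson Y' Xs' = Y' \<union> (\<Union>j\<in>{1..nsub}. Xs' (n + j))"

definition "to_prior X = (\<lambda>(Y', a', Xs').
  (prior_poisson Y' Xs', restrict (\<lambda>i. prev_hyp i (a' i)) {1..n}, restrict Xs' {1..n},
   prior_assoc X a' Xs'))"

lemma post_hyp_old: "i \<in> {1..n} \<Longrightarrow> post_hyp X Y a Xs Zs i = a i + h i * subset_index (\<Union>x\<in>Xs i. Zs x)"
  by (simp add: post_hyp_def)

lemma post_hyp_new:
  "j \<in> {1..nsub} \<Longrightarrow> post_hyp X Y a Xs Zs (n + j) = (if meas_subset j \<in> birth_sets X Y Zs then 2 else 1)"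
  unfolding post_hyp_def using n'_eq by simp

lemma post_assign_old: "i \<in> {1..n} \<Longrightarrow> post_assign Y Xs Zs i = Xs i"
  by (simp add: post_assign_def)

lemma post_assign_new: "j \<in> {1..nsub} \<Longrightarrow> post_assign Y Xs Zs (n + j) = {y \<in> Y. Zs y = meas_subset j}"
  unfolding post_assign_def using n'_eq by simp

lemma prod_bernoulli_split:
  "(\<Prod>c\<in>{1..n'}. F c) = (\<Prod>i\<in>{1..n}. F i) * (\<Prod>j\<in>{1..nsub}. F (n + j))"
proof -
  have eq: "{1..n'} = {1..n} \<union> (\<lambda>j. n + j) ` {1..nsub}" using n'_eq by auto
  have "(\<Prod>c\<in>{1..n'}. F c) = (\<Prod>i\<in>{1..n}. F i) * (\<Prod>c\<in>(\<lambda>j. n + j) ` {1..nsub}. F c)"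
    unfolding eq by (rule prod.union_disjoint) auto
  also have "(\<Prod>c\<in>(\<lambda>j. n + j) ` {1..nsub}. F c) = (\<Prod>j\<in>{1..nsub}. F (n + j))"
    by (rule prod.reindex_cong[of "\<lambda>j. n + j"]) (auto simp: inj_on_def)
  finally show ?thesis .
qed

lemma prod_clutter_singletons:
  "(\<Prod>j\<in>{1..nsub}. \<Prod>z\<in>{z \<in> clutter X Zs. meas_subset j = {z}}. F z) = (\<Prod>z\<in>clutter X Zs. F z)"
proof -
  have "{z \<in> clutter X Zs. meas_subset j = {z}} = {z. z \<in> clutter X Zs \<and> subset_index {z} = j}"
    if j: "j \<in> {1..nsub}" for j
    using j subset_index_meas_subset[of j] meas_subset_index[of "{_}"] by (auto simp: clutter_def)
  then have "(\<Prod>j\<in>{1..nsub}. \<Prod>z\<in>{z \<in> clutter X Zs. meas_subset j = {z}}. F z) =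
      (\<Prod>j\<in>{1..nsub}. \<Prod>z\<in>{z. z \<in> clutter X Zs \<and> subset_index {z} = j}. F z)"
    by (intro prod.cong) simp_all
  also have "\<dots> = (\<Prod>z\<in>clutter X Zs. F z)"
    using finite_Zk subset_index_pos by (intro prod.group) (auto simp: clutter_def)
  finally show ?thesis .
qed

lemma post_hyp_outside: "c \<notin> {1..n'} \<Longrightarrow> post_hyp X Y a Xs Zs c = undefined"
  unfolding post_hyp_def using n'_eq by auto

lemma post_assign_outside: "c \<notin> {1..n'} \<Longrightarrow> post_assign Y Xs Zs c = undefined"
  unfolding post_assign_def using n'_eq by auto

context
  fixes X Y a Xs and Zs :: "'x \<Rightarrow> 'z set"
  assumes X: "finite X" and Y: "Y \<subseteq> X" and a: "a \<in> hyps" and Xs: "Xs \<in> decomps n (X - Y)"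
    and Zs: "Zs \<in> assocs X Zk" and Xs_subsingleton: "\<forall>i\<in>{1..n}. subsingleton (Xs i)"
begin

abbreviation "a' \<equiv> post_hyp X Y a Xs Zs"
abbreviation "Xs' \<equiv> post_assign Y Xs Zs"

lemma Zs_subset: "x \<in> X \<Longrightarrow> Zs x \<subseteq> Zk"
  using Zs by (auto simp: assocs_def)

lemma Zs_disjoint: "x \<in> X \<Longrightarrow> x' \<in> X \<Longrightarrow> x \<noteq> x' \<Longrightarrow> Zs x \<inter> Zs x' = {}"
  using Zs by (auto simp: assocs_def disjoint_family_on_def)

lemma Xs_subset: "i \<in> {1..n} \<Longrightarrow> Xs i \<subseteq> X - Y"
  using Xs by (auto simp: decomps_iff)

lemma Xs_disjoint: "i \<in> {1..n} \<Longrightarrow> i' \<in> {1..n} \<Longrightarrow> i \<noteq> i' \<Longrightarrow> Xs i \<inter> Xs i' = {}"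
  using Xs by (auto simp: decomps_iff disjoint_family_on_def)

lemma Xs_UN: "(\<Union>i\<in>{1..n}. Xs i) = X - Y"
  using Xs by (simp add: decomps_iff)

lemma a_range: "i \<in> {1..n} \<Longrightarrow> a i \<in> {1..h i}"
  using a by (auto simp: hyps_def glob_hyps_iff)

lemma assoc_subset: "i \<in> {1..n} \<Longrightarrow> (\<Union>x\<in>Xs i. Zs x) \<subseteq> Zk"
  using Xs_subset Zs_subset by blast

lemma hyp_meas_post_old: "i \<in> {1..n} \<Longrightarrow> hyp_meas i (a' i) = (\<Union>x\<in>Xs i. Zs x)"
  using assoc_index_encode[OF a_range] meas_subset_index[OF assoc_subset]
  by (simp add: hyp_meas_def post_hyp_old)

lemma hyp_meas_post_new:
  "j \<in> {1..nsub} \<Longrightarrow>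
    hyp_meas (n + j) (a' (n + j)) = (if meas_subset j \<in> birth_sets X Y Zs then meas_subset j else {})"
  by (simp add: hyp_meas_def post_hyp_new)

lemma post_hyp_PiE: "a' \<in> Pi\<^sub>E {1..n'} (\<lambda>c. {1..h' c})"
proof (rule PiE_I)
  fix c assume "c \<in> {1..n'}"
  then show "a' c \<in> {1..h' c}"
  proof (cases rule: bernoulli_index_cases)
    case old
    then show ?thesis
      using old_hyp_encode_range[OF old a_range subset_index_le[OF assoc_subset]]
      by (simp add: post_hyp_old)
  next
    case (new j)
    then show ?thesis by (simp add: post_hyp_new h'_new)
  qed
next
  fix c assume "c \<notin> {1..n'}"
  then show "a' c = undefined" unfolding post_hyp_def using n'_eq by auto
qed

lemma prev_hyp_post_hyp: "restrict (\<lambda>i. prev_hyp i (a' i)) {1..n} = a"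
proof
  fix i
  show "restrict (\<lambda>i. prev_hyp i (a' i)) {1..n} i = a i"
    using a prev_hyp_encode[OF a_range] by (cases "i \<in> {1..n}") (auto simp: post_hyp_old hyps_def glob_hyps_def)
qed

lemma post_assign_subset:
  assumes "c \<in> {1..n'}"
  shows "Xs' c \<subseteq> X - {y \<in> Y. Zs y = {}}"
  using assms
proof (cases rule: bernoulli_index_cases)
  case old
  then show ?thesis using Xs_subset by (auto simp: post_assign_old)
next
  case (new j)
  then show ?thesis using Y meas_subset_nonempty[OF new(1)] by (auto simp: post_assign_new)
qed

lemma post_assign_disjoint: "disjoint_family_on Xs' {1..n'}"
proof -
  have disj_old_new: "Xs' i \<inter> Xs' (n + j) = {}" if "i \<in> {1..n}" "j \<in> {1..nsub}" for i j
    using Xs_subset[OF that(1)] by (auto simp: post_assign_old[OF that(1)] post_assign_new[OF that(2)])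
  have disj_new_new: "Xs' (n + j) \<inter> Xs' (n + j') = {}" if "j \<in> {1..nsub}" "j' \<in> {1..nsub}" "j \<noteq> j'" for j j'
  proof -
    have "meas_subset j \<noteq> meas_subset j'" using meas_subset_inj that by auto
    then show ?thesis by (auto simp: post_assign_new[OF that(1)] post_assign_new[OF that(2)])
  qed
  show ?thesis
    unfolding disjoint_family_on_def
  proof (intro ballI impI)
    fix c d assume c: "c \<in> {1..n'}" and d: "d \<in> {1..n'}" and "c \<noteq> d"
    from c d show "Xs' c \<inter> Xs' d = {}"
    proof (cases rule: bernoulli_index_cases[case_product bernoulli_index_cases])
      case old_old
      then show ?thesis using Xs_disjoint \<open>c \<noteq> d\<close> by (simp add: post_assign_old)
    next
      case (old_new j)
      then show ?thesis using disj_old_new[of c j] by simp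
    next
      case (new_old j)
      then show ?thesis using disj_old_new[of d j] by (simp add: Int_commute)
    next
      case (new_new j j')
      then show ?thesis using disj_new_new[of j j'] \<open>c \<noteq> d\<close> by simp
    qed
  qed
qed

lemma detected_target_assign:
  assumes "y \<in> Y" and "Zs y \<noteq> {}"
  shows "subset_index (Zs y) \<in> {1..nsub}" and "y \<in> Xs' (n + subset_index (Zs y))"
proof -
  have sub: "Zs y \<subseteq> Zk" using Zs_subset assms(1) Y by blast
  show j: "subset_index (Zs y) \<in> {1..nsub}" using subset_index_pos[OF sub assms(2)] .
  show "y \<in> Xs' (n + subset_index (Zs y))"
    using assms(1) meas_subset_index[OF sub] by (simp add: post_assign_new[OF j])
qed

lemma post_assign_UN: "(\<Union>c\<in>{1..n'}. Xs' c) = X - {y \<in> Y. Zs y = {}}"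
proof
  show "(\<Union>c\<in>{1..n'}. Xs' c) \<subseteq> X - {y \<in> Y. Zs y = {}}"
    using post_assign_subset by blast
  show "X - {y \<in> Y. Zs y = {}} \<subseteq> (\<Union>c\<in>{1..n'}. Xs' c)"
  proof
    fix x assume x: "x \<in> X - {y \<in> Y. Zs y = {}}"
    show "x \<in> (\<Union>c\<in>{1..n'}. Xs' c)"
    proof (cases "x \<in> Y")
      case False
      then obtain i where "i \<in> {1..n}" and "x \<in> Xs i" using x Xs_UN by blast
      then show ?thesis using old_index_in_range by (intro UN_I[of i]) (auto simp: post_assign_old)
    next
      case True
      then have "Zs x \<noteq> {}" using x by blast
      then show ?thesis
        using detected_target_assign[OF True] new_index_in_range
        by (intro UN_I[of "n + subset_index (Zs x)"]) auto
    qed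
  qed
qed

lemma post_assign_decomps: "Xs' \<in> decomps n' (X - {y \<in> Y. Zs y = {}})"
  unfolding decomps_iff
proof (intro conjI PiE_I)
  show "c \<in> {1..n'} \<Longrightarrow> Xs' c \<in> Pow (X - {y \<in> Y. Zs y = {}})" for c
    using post_assign_subset by blast
  show "c \<notin> {1..n'} \<Longrightarrow> Xs' c = undefined" for c
    unfolding post_assign_def using n'_eq by auto
qed (fact post_assign_UN post_assign_disjoint)+

lemma post_assign_subsingleton:
  assumes "c \<in> {1..n'}"
  shows "subsingleton (Xs' c)"
  using assms
proof (cases rule: bernoulli_index_cases)
  case old
  then show ?thesis using Xs_subsingleton by (simp add: post_assign_old)
next
  case (new j)
  have "y = y'" if "y \<in> Y" "y' \<in> Y" "Zs y = meas_subset j" "Zs y' = meas_subset j" for y y'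
    using that Zs_disjoint[of y y'] Y meas_subset_nonempty[OF new(1)] by auto
  then show ?thesis by (auto simp: new(2) post_assign_new[OF new(1)] subsingleton_def)
qed

lemma clutter_not_assoc: "z \<in> clutter X Zs \<Longrightarrow> x \<in> X \<Longrightarrow> z \<notin> Zs x"
  by (auto simp: clutter_def)

lemma mem_hyp_meas_post:
  assumes "c \<in> {1..n'}"
  shows "z \<in> hyp_meas c (a' c) \<longleftrightarrow>
    (\<exists>x\<in>Xs' c. z \<in> Zs x) \<or> (n < c \<and> meas_subset (c - n) = {z} \<and> z \<in> clutter X Zs)"
  using assms
proof (cases rule: bernoulli_index_cases)
  case old
  then show ?thesis by (auto simp: hyp_meas_post_old post_assign_old)
next
  case (new j)
  have "z \<in> hyp_meas c (a' c) \<longleftrightarrow> meas_subset j \<in> birth_sets X Y Zs \<and> z \<in> meas_subset j"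
    by (simp add: new(2) hyp_meas_post_new[OF new(1)])
  also have "\<dots> \<longleftrightarrow>
      (\<exists>x\<in>{y \<in> Y. Zs y = meas_subset j}. z \<in> Zs x) \<or> (meas_subset j = {z} \<and> z \<in> clutter X Zs)"
    by (auto simp: birth_sets_def)
  finally show ?thesis using new by (simp add: post_assign_new[OF new(1)])
qed

lemma hyp_meas_post_UN: "(\<Union>c\<in>{1..n'}. hyp_meas c (a' c)) = Zk"
proof
  show "(\<Union>c\<in>{1..n'}. hyp_meas c (a' c)) \<subseteq> Zk"
    using M'_split post_hyp_PiE by blast
  show "Zk \<subseteq> (\<Union>c\<in>{1..n'}. hyp_meas c (a' c))"
  proof
    fix z assume z: "z \<in> Zk"
    show "z \<in> (\<Union>c\<in>{1..n'}. hyp_meas c (a' c))"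
    proof (cases "z \<in> clutter X Zs")
      case False
      then obtain x where x: "x \<in> X" "z \<in> Zs x" using z by (auto simp: clutter_def)
      then obtain c where "c \<in> {1..n'}" and "x \<in> Xs' c" using post_assign_UN by blast
      then show ?thesis using x mem_hyp_meas_post by blast
    next
      case True
      then have j: "subset_index {z} \<in> {1..nsub}" and "meas_subset (subset_index {z}) = {z}"
        using z subset_index_pos[of "{z}"] meas_subset_index[of "{z}"] by auto
      then show ?thesis
        using True mem_hyp_meas_post[OF new_index_in_range[OF j]] new_index_in_range[OF j]
        by (intro UN_I[of "n + subset_index {z}"]) auto
    qed
  qed
qed

lemma hyp_meas_post_disjoint: "disjoint_family_on (\<lambda>c. hyp_meas c (a' c)) {1..n'}"
  unfolding disjoint_family_on_def
proof (intro ballI impI equals0I)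
  fix c d z assume c: "c \<in> {1..n'}" and d: "d \<in> {1..n'}" and "c \<noteq> d"
    and "z \<in> hyp_meas c (a' c) \<inter> hyp_meas d (a' d)"
  then have zc: "(\<exists>x\<in>Xs' c. z \<in> Zs x) \<or> (n < c \<and> meas_subset (c - n) = {z} \<and> z \<in> clutter X Zs)"
    and zd: "(\<exists>x\<in>Xs' d. z \<in> Zs x) \<or> (n < d \<and> meas_subset (d - n) = {z} \<and> z \<in> clutter X Zs)"
    using mem_hyp_meas_post by auto
  have Xs'_X: "Xs' e \<subseteq> X" if "e \<in> {1..n'}" for e using post_assign_subset[OF that] by blast
  show False
  proof (cases "\<exists>x\<in>Xs' c. z \<in> Zs x")
    case True
    then obtain x where x: "x \<in> Xs' c" "z \<in> Zs x" by blast
    then obtain x' where x': "x' \<in> Xs' d" "z \<in> Zs x'"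
      using zd clutter_not_assoc Xs'_X[OF c] by blast
    have "x = x'" using Zs_disjoint x x' Xs'_X c d by blast
    then show False using post_assign_disjoint x(1) x'(1) c d \<open>c \<noteq> d\<close>
      unfolding disjoint_family_on_def by blast
  next
    case False
    then have "n < c" "meas_subset (c - n) = {z}" "z \<in> clutter X Zs" using zc by auto
    moreover have "n < d" "meas_subset (d - n) = {z}"
      using zd \<open>z \<in> clutter X Zs\<close> clutter_not_assoc Xs'_X[OF d] by auto
    moreover have "c - n \<le> nsub" "d - n \<le> nsub" using c d n'_eq by auto
    ultimately have "c - n = d - n" using meas_subset_inj by auto
    then show False using \<open>c \<noteq> d\<close> \<open>n < c\<close> \<open>n < d\<close> by simp
  qed
qed

lemma post_hyp_in_hyps': "a' \<in> hyps'"
  using hyps'_iff[OF post_hyp_PiE] prev_hyp_post_hyp a hyp_meas_post_UN hyp_meas_post_disjoint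
  by simp

lemma to_post_in_post_terms: "to_post X (Y, a, Xs, Zs) \<in> post_terms X"
  using Y post_hyp_in_hyps' post_assign_decomps by (auto simp: to_post_def post_terms_def)

lemma to_post_admissible: "post_admissible (to_post X (Y, a, Xs, Zs))"
  unfolding to_post_def post_admissible_def prod.case
proof
  fix c assume c: "c \<in> {1..n'}"
  show "local_admissible c (a' c) (Xs' c)"
    using c
  proof (cases rule: bernoulli_index_cases)
    case old
    then show ?thesis
      using post_assign_subsingleton[OF c] assoc_index_encode[OF a_range[OF old], of 0]
      by (simp add: local_admissible_def post_hyp_old[OF old] post_assign_old[OF old])
  next
    case (new j)
    have "\<not> c \<le> n" and "c - n = j" using new by auto
    moreover have "a' c = 1 \<Longrightarrow> Xs' c = {}"
      by (auto simp: new(2) post_hyp_new[OF new(1)] post_assign_new[OF new(1)] birth_sets_def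
          split: if_splits)
    moreover have "a' c = 2 \<Longrightarrow> Xs' c = {} \<Longrightarrow> card (meas_subset j) = 1"
      by (auto simp: new(2) post_hyp_new[OF new(1)] post_assign_new[OF new(1)] birth_sets_def
          split: if_splits)
    ultimately show ?thesis
      using post_assign_subsingleton[OF c] by (simp add: local_admissible_def)
  qed
qed

lemma hyp_meas_post_owner:
  assumes "c \<in> {1..n'}" and "x \<in> Xs' c"
  shows "hyp_meas c (a' c) = Zs x"
  using assms(1)
proof (cases rule: bernoulli_index_cases)
  case old
  then have "Xs c = {x}"
    using assms(2) Xs_subsingleton by (auto simp: post_assign_old subsingleton_def)
  then show ?thesis using hyp_meas_post_old[OF old] by simp
next
  case (new j)
  then show ?thesis
    using assms(2) by (auto simp: hyp_meas_post_new[OF new(1)] post_assign_new[OF new(1)] birth_sets_def)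
qed

lemma to_prior_to_post: "to_prior X (to_post X (Y, a, Xs, Zs)) = (Y, a, Xs, Zs)"
proof -
  have "(\<Union>j\<in>{1..nsub}. Xs' (n + j)) \<subseteq> Y" by (auto simp: post_assign_new)
  moreover have "{y \<in> Y. Zs y \<noteq> {}} \<subseteq> (\<Union>j\<in>{1..nsub}. Xs' (n + j))"
    using detected_target_assign by blast
  ultimately have Y_eq: "prior_poisson {y \<in> Y. Zs y = {}} Xs' = Y" unfolding prior_poisson_def by blast
  have Xs_eq: "restrict Xs' {1..n} = Xs"
  proof
    fix i show "restrict Xs' {1..n} i = Xs i"
      using Xs by (cases "i \<in> {1..n}") (auto simp: post_assign_old decomps_def PiE_def extensional_def)
  qed
  have Zs_eq: "prior_assoc X a' Xs' = Zs"
  proof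
    fix x show "prior_assoc X a' Xs' x = Zs x"
    proof (cases "x \<in> X - {y \<in> Y. Zs y = {}}")
      case True
      then obtain c where c: "c \<in> {1..n'}" "x \<in> Xs' c" using post_assign_UN by blast
      then have "{d \<in> {1..n'}. x \<in> Xs' d} = {c}"
        using post_assign_disjoint unfolding disjoint_family_on_def by blast
      then show ?thesis using True hyp_meas_post_owner[OF c] by (simp add: prior_assoc_def)
    next
      case False
      then have "{d \<in> {1..n'}. x \<in> Xs' d} = {}" using post_assign_subset by blast
      then show ?thesis
        using False Zs by (auto simp: prior_assoc_def assocs_def PiE_def extensional_def)
    qed
  qed
  show ?thesis using Y_eq prev_hyp_post_hyp Xs_eq Zs_eq by (simp add: to_prior_def to_post_def)
qed

lemma post_factor_old:
  assumes i: "i \<in> {1..n}"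
  shows "post_factor i (a' i) (Xs' i) =
    w i (a i) * bern_dens (r i (a i)) (f i (a i)) (Xs i) * (\<Prod>x\<in>Xs i. g (Zs x) x)"
proof -
  from Xs_subsingleton i have "subsingleton (Xs i)" by blast
  then consider "Xs i = {}" | x where "Xs i = {x}" by (rule subsingleton_cases)
  then show ?thesis
  proof cases
    case 1
    then show ?thesis
      using missed_update(3)[OF i a_range[OF i]]
      by (simp add: post_factor_def post_hyp_old[OF i] post_assign_old[OF i])
  next
    case (2 x)
    then have sub: "Zs x \<subseteq> Zk" using Xs_subset[OF i] Zs_subset by blast
    show ?thesis
      using old_factor_singleton[OF i a_range[OF i] subset_index_le[OF sub], of x]
        meas_subset_index[OF sub] 2
      by (simp add: post_factor_def post_hyp_old[OF i] post_assign_old[OF i])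
  qed
qed

lemma post_factor_new:
  assumes j: "j \<in> {1..nsub}"
  shows "post_factor (n + j) (a' (n + j)) (Xs' (n + j)) =
    (\<Prod>y\<in>Xs' (n + j). g (Zs y) y * lam y) * (\<Prod>z\<in>{z \<in> clutter X Zs. meas_subset j = {z}}. lamC z)"
proof -
  note Xs'_j = post_assign_new[OF j, of Y Xs Zs] and a'_j = post_hyp_new[OF j, of X Y a Xs Zs]
  have "subsingleton (Xs' (n + j))" using post_assign_subsingleton[OF new_index_in_range[OF j]] .
  then consider (target) y where "Xs' (n + j) = {y}"
    | (clutter) z where "Xs' (n + j) = {}" and "meas_subset j = {z}" and "z \<in> clutter X Zs"
    | (none) "Xs' (n + j) = {}" and "meas_subset j \<notin> (\<lambda>z. {z}) ` clutter X Zs"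
    by (elim subsingleton_cases) auto
  then show ?thesis
  proof cases
    case (target y)
    then have y: "y \<in> Y" "Zs y = meas_subset j" using Xs'_j by auto
    then have no_clutter: "{z \<in> clutter X Zs. meas_subset j = {z}} = {}"
      using Y clutter_not_assoc by fastforce
    have "a' (n + j) = 2" using y a'_j by (auto simp: birth_sets_def)
    then show ?thesis
      unfolding post_factor_def no_clutter target using birth_update(8)[OF j, of y] y by simp
  next
    case (clutter z)
    then have "a' (n + j) = 2" using a'_j by (auto simp: birth_sets_def)
    moreover have "{z' \<in> clutter X Zs. meas_subset j = {z'}} = {z}" using clutter by auto
    ultimately show ?thesis using clutter birth_update(7)[OF j] by (simp add: post_factor_def)
  next
    case none
    then have "meas_subset j \<notin> birth_sets X Y Zs" using Xs'_j by (auto simp: birth_sets_def)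
    then have "a' (n + j) = 1" using a'_j by simp
    moreover have no_clutter: "{z \<in> clutter X Zs. meas_subset j = {z}} = {}" using none by auto
    ultimately show ?thesis
      unfolding post_factor_def no_clutter none(1) using birth_update(2)[OF j] by simp
  qed
qed

lemma prod_post_factor_old:
  "(\<Prod>i\<in>{1..n}. post_factor i (a' i) (Xs' i)) =
    (\<Prod>i\<in>{1..n}. w i (a i)) * (\<Prod>i\<in>{1..n}. bern_dens (r i (a i)) (f i (a i)) (Xs i)) *
    (\<Prod>x\<in>X - Y. g (Zs x) x)"
proof -
  have "finite (Xs i)" if "i \<in> {1..n}" for i
    using Xs_subset[OF that] X by (meson Diff_subset finite_subset subset_trans)
  then have "(\<Prod>i\<in>{1..n}. \<Prod>x\<in>Xs i. g (Zs x) x) = (\<Prod>x\<in>X - Y. g (Zs x) x)"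
    unfolding Xs_UN[symmetric] using Xs_disjoint by (subst prod.UNION_disjoint) auto
  then show ?thesis by (simp add: post_factor_old prod.distrib)
qed

lemma prod_new_assignments:
  "(\<Prod>j\<in>{1..nsub}. \<Prod>y\<in>Xs' (n + j). F y) = (\<Prod>y\<in>{y \<in> Y. Zs y \<noteq> {}}. F y)"
proof -
  have "Xs' (n + j) = {y. y \<in> {y \<in> Y. Zs y \<noteq> {}} \<and> subset_index (Zs y) = j}"
    if j: "j \<in> {1..nsub}" for j
    using j Y Zs_subset meas_subset_nonempty[OF j] subset_index_meas_subset[of j] meas_subset_index
    by (auto simp: post_assign_new[OF j])
  then have "(\<Prod>j\<in>{1..nsub}. \<Prod>y\<in>Xs' (n + j). F y) =
      (\<Prod>j\<in>{1..nsub}. \<Prod>y\<in>{y. y \<in> {y \<in> Y. Zs y \<noteq> {}} \<and> subset_index (Zs y) = j}. F y)"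
    by (intro prod.cong) simp_all
  also have "\<dots> = (\<Prod>y\<in>{y \<in> Y. Zs y \<noteq> {}}. F y)"
  proof (rule prod.group)
    show "(\<lambda>y. subset_index (Zs y)) ` {y \<in> Y. Zs y \<noteq> {}} \<subseteq> {1..nsub}"
      using detected_target_assign(1) by blast
  qed (use X Y in \<open>auto intro: finite_subset\<close>)
  finally show ?thesis .
qed

lemma prod_post_factor_new:
  "(\<Prod>j\<in>{1..nsub}. post_factor (n + j) (a' (n + j)) (Xs' (n + j))) =
    (\<Prod>y\<in>{y \<in> Y. Zs y \<noteq> {}}. g (Zs y) y * lam y) * (\<Prod>z\<in>clutter X Zs. lamC z)"
proof -
  have "(\<Prod>j\<in>{1..nsub}. post_factor (n + j) (a' (n + j)) (Xs' (n + j))) =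
      (\<Prod>j\<in>{1..nsub}. (\<Prod>y\<in>Xs' (n + j). g (Zs y) y * lam y) *
        (\<Prod>z\<in>{z \<in> clutter X Zs. meas_subset j = {z}}. lamC z))"
    by (rule prod.cong[OF refl]) (rule post_factor_new)
  also have "\<dots> = (\<Prod>j\<in>{1..nsub}. \<Prod>y\<in>Xs' (n + j). g (Zs y) y * lam y) *
      (\<Prod>j\<in>{1..nsub}. \<Prod>z\<in>{z \<in> clutter X Zs. meas_subset j = {z}}. lamC z)"
    by (rule prod.distrib)
  finally show ?thesis unfolding prod_new_assignments prod_clutter_singletons .
qed

lemma post_term_to_post: "post_term (to_post X (Y, a, Xs, Zs)) = prior_term X (Y, a, Xs, Zs)"
proof -
  let ?U = "{y \<in> Y. Zs y = {}}" and ?G = "\<lambda>x. g (Zs x) x"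
  have fin: "finite Y" "finite ?U" using X Y by (auto intro: finite_subset)
  have "{y \<in> Y. Zs y \<noteq> {}} = Y - ?U" by auto
  then have new: "(\<Prod>j\<in>{1..nsub}. post_factor (n + j) (a' (n + j)) (Xs' (n + j))) =
      (\<Prod>y\<in>Y - ?U. ?G y * lam y) * (\<Prod>z\<in>clutter X Zs. lamC z)"
    using prod_post_factor_new by simp
  have "(\<Prod>y\<in>?U. lam' y) = (\<Prod>y\<in>?U. ?G y * lam y)"
    using upd_lam by simp
  moreover have "(\<Prod>y\<in>Y. ?G y * lam y) = (\<Prod>y\<in>Y - ?U. ?G y * lam y) * (\<Prod>y\<in>?U. ?G y * lam y)"
    by (rule prod.subset_diff) (use fin in auto)
  moreover have "(\<Prod>x\<in>X. ?G x) = (\<Prod>x\<in>X - Y. ?G x) * (\<Prod>x\<in>Y. ?G x)"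
    by (rule prod.subset_diff[OF Y X])
  ultimately show ?thesis
    unfolding to_post_def prod.case post_term_def prior_term_def prod_bernoulli_split
      prod_post_factor_old new
    by (simp add: prod.distrib mult_ac)
qed

end

context
  fixes X Y' a' Xs'
  assumes X: "finite X" and Y': "Y' \<subseteq> X" and a': "a' \<in> hyps'" and Xs': "Xs' \<in> decomps n' (X - Y')"
    and admissible: "post_admissible (Y', a', Xs')"
begin

lemma a'_PiE: "a' \<in> Pi\<^sub>E {1..n'} (\<lambda>c. {1..h' c})"
  using a' by (simp add: hyps'_def glob_hyps_iff)

lemma a'_range: "c \<in> {1..n'} \<Longrightarrow> a' c \<in> {1..h' c}"
  using a'_PiE by auto

lemma hyp_meas_UN: "(\<Union>c\<in>{1..n'}. hyp_meas c (a' c)) = Zk"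
  and hyp_meas_disjoint: "disjoint_family_on (\<lambda>c. hyp_meas c (a' c)) {1..n'}"
  and prev_hyp_in_hyps: "restrict (\<lambda>i. prev_hyp i (a' i)) {1..n} \<in> hyps"
  using hyps'_iff[OF a'_PiE] a' by simp_all

lemma Xs'_subset: "c \<in> {1..n'} \<Longrightarrow> Xs' c \<subseteq> X - Y'"
  using Xs' by (auto simp: decomps_iff)

lemma Xs'_UN: "(\<Union>c\<in>{1..n'}. Xs' c) = X - Y'"
  using Xs' by (simp add: decomps_iff)

lemma Xs'_disjoint: "c \<in> {1..n'} \<Longrightarrow> d \<in> {1..n'} \<Longrightarrow> c \<noteq> d \<Longrightarrow> Xs' c \<inter> Xs' d = {}"
  using Xs' by (auto simp: decomps_iff disjoint_family_on_def)

lemma admissible_at: "c \<in> {1..n'} \<Longrightarrow> local_admissible c (a' c) (Xs' c)"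
  using admissible by (simp add: post_admissible_def)

lemma new_hyp_cases: "j \<in> {1..nsub} \<Longrightarrow> a' (n + j) = 1 \<or> a' (n + j) = 2"
  using a'_range[OF new_index_in_range] h'_new by fastforce

lemma hyp_meas_new:
  "j \<in> {1..nsub} \<Longrightarrow> hyp_meas (n + j) (a' (n + j)) = (if a' (n + j) = 2 then meas_subset j else {})"
  by (simp add: hyp_meas_def)

lemma new_nonempty_hyp:
  assumes "j \<in> {1..nsub}" and "Xs' (n + j) \<noteq> {}"
  shows "a' (n + j) = 2"
  using admissible_at[OF new_index_in_range[OF assms(1)]] new_hyp_cases[OF assms(1)] assms
  by (auto simp: local_admissible_def)

lemma hyp_meas_nonempty:
  assumes "c \<in> {1..n'}" and "Xs' c = {}" and "hyp_meas c (a' c) \<noteq> {}"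
  obtains j where "j \<in> {1..nsub}" and "c = n + j" and "hyp_meas c (a' c) = meas_subset j"
    and "card (meas_subset j) = 1"
  using assms(1)
proof (cases rule: bernoulli_index_cases)
  case old
  then show ?thesis using admissible_at[OF assms(1)] assms(2,3)
    by (auto simp: local_admissible_def hyp_meas_def)
next
  case (new j)
  then have "a' c = 2" using assms(3) hyp_meas_new by fastforce
  then show ?thesis using that new admissible_at[OF assms(1)] assms(2)
    by (auto simp: local_admissible_def hyp_meas_new)
qed

lemma prior_assoc_owner:
  assumes "c \<in> {1..n'}" and "x \<in> Xs' c"
  shows "prior_assoc X a' Xs' x = hyp_meas c (a' c)"
proof -
  have "{d \<in> {1..n'}. x \<in> Xs' d} = {c}" using assms Xs'_disjoint by blast
  then show ?thesis using assms Xs'_subset by (auto simp: prior_assoc_def)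
qed

lemma prior_assoc_undetected: "x \<in> Y' \<Longrightarrow> prior_assoc X a' Xs' x = {}"
  using Xs'_subset Y' by (auto simp: prior_assoc_def)

lemma prior_assoc_cases:
  assumes "x \<in> X"
  obtains "x \<in> Y'" and "prior_assoc X a' Xs' x = {}"
    | c where "c \<in> {1..n'}" and "x \<in> Xs' c" and "prior_assoc X a' Xs' x = hyp_meas c (a' c)"
  using assms Xs'_UN prior_assoc_owner prior_assoc_undetected by blast

lemma prior_poisson_subset: "prior_poisson Y' Xs' \<subseteq> X"
  unfolding prior_poisson_def using Y' Xs'_subset[OF new_index_in_range] by blast

lemma old_assign_subset:
  assumes i: "i \<in> {1..n}"
  shows "Xs' i \<subseteq> X - prior_poisson Y' Xs'"
proof -
  have "Xs' i \<inter> Xs' (n + j) = {}" if "j \<in> {1..nsub}" for j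
    using Xs'_disjoint[OF old_index_in_range[OF i] new_index_in_range[OF that]] i that by auto
  then show ?thesis using Xs'_subset[OF old_index_in_range[OF i]] unfolding prior_poisson_def by blast
qed

lemma restrict_assign_decomps: "restrict Xs' {1..n} \<in> decomps n (X - prior_poisson Y' Xs')"
  unfolding decomps_iff
proof (intro conjI)
  show "restrict Xs' {1..n} \<in> Pi\<^sub>E {1..n} (\<lambda>_. Pow (X - prior_poisson Y' Xs'))"
    using old_assign_subset by auto
  show "disjoint_family_on (restrict Xs' {1..n}) {1..n}"
    using Xs'_disjoint[OF old_index_in_range old_index_in_range] by (auto simp: disjoint_family_on_def)
  show "(\<Union>i\<in>{1..n}. restrict Xs' {1..n} i) = X - prior_poisson Y' Xs'"
  proof
    show "(\<Union>i\<in>{1..n}. restrict Xs' {1..n} i) \<subseteq> X - prior_poisson Y' Xs'"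
      by (rule UN_least) (simp add: old_assign_subset)
    show "X - prior_poisson Y' Xs' \<subseteq> (\<Union>i\<in>{1..n}. restrict Xs' {1..n} i)"
    proof
      fix x assume x: "x \<in> X - prior_poisson Y' Xs'"
      then have "x \<in> X - Y'" by (simp add: prior_poisson_def)
      then obtain c where c: "c \<in> {1..n'}" "x \<in> Xs' c"
        unfolding Xs'_UN[symmetric] by blast
      from c(1) show "x \<in> (\<Union>i\<in>{1..n}. restrict Xs' {1..n} i)"
      proof (cases rule: bernoulli_index_cases)
        case old
        then show ?thesis using c by auto
      next
        case (new j)
        then show ?thesis using c x by (auto simp: prior_poisson_def)
      qed
    qed
  qed
qed

lemma prior_assoc_in_assocs: "prior_assoc X a' Xs' \<in> assocs X Zk"
  unfolding assocs_def
proof (intro CollectI conjI PiE_I)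
  show "prior_assoc X a' Xs' x \<in> Pow Zk" if "x \<in> X" for x
    using that hyp_meas_UN by (cases rule: prior_assoc_cases) auto
  show "prior_assoc X a' Xs' x = undefined" if "x \<notin> X" for x
    using that by (simp add: prior_assoc_def)
  show "disjoint_family_on (prior_assoc X a' Xs') X"
    unfolding disjoint_family_on_def
  proof (intro ballI impI)
    fix x y assume x: "x \<in> X" and y: "y \<in> X" and "x \<noteq> y"
    show "prior_assoc X a' Xs' x \<inter> prior_assoc X a' Xs' y = {}"
      using x
    proof (cases rule: prior_assoc_cases)
      case (2 c)
      from y show ?thesis
      proof (cases rule: prior_assoc_cases)
        case (2 d)
        have "c \<noteq> d"
          using admissible_at[OF \<open>c \<in> {1..n'}\<close>] \<open>x \<in> Xs' c\<close> \<open>y \<in> Xs' d\<close> \<open>x \<noteq> y\<close>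
          by (auto simp: local_admissible_def subsingleton_def)
        then show ?thesis
          using hyp_meas_disjoint \<open>c \<in> {1..n'}\<close> \<open>d \<in> {1..n'}\<close>
            \<open>prior_assoc X a' Xs' x = hyp_meas c (a' c)\<close> \<open>prior_assoc X a' Xs' y = hyp_meas d (a' d)\<close>
          by (auto simp: disjoint_family_on_def)
      qed simp
    qed simp
  qed
qed

lemma to_prior_in_prior_terms: "to_prior X (Y', a', Xs') \<in> prior_terms X"
  using prior_poisson_subset prev_hyp_in_hyps restrict_assign_decomps prior_assoc_in_assocs
  by (simp add: to_prior_def prior_terms_def)

lemma to_prior_admissible: "prior_admissible (to_prior X (Y', a', Xs'))"
  using admissible_at[OF old_index_in_range]
  by (simp add: to_prior_def prior_admissible_def local_admissible_def)

lemma new_target_assoc: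
  assumes j: "j \<in> {1..nsub}" and y: "y \<in> Xs' (n + j)"
  shows "prior_assoc X a' Xs' y = meas_subset j"
  using prior_assoc_owner[OF new_index_in_range[OF j] y] new_nonempty_hyp[OF j] y hyp_meas_new[OF j]
  by auto

lemma prior_assoc_eq_meas_subset:
  assumes j: "j \<in> {1..nsub}" and y: "y \<in> prior_poisson Y' Xs'"
    and eq: "prior_assoc X a' Xs' y = meas_subset j"
  shows "y \<in> Xs' (n + j)"
proof -
  have "y \<notin> Y'" using prior_assoc_undetected eq meas_subset_nonempty[OF j] by auto
  then obtain j' where j': "j' \<in> {1..nsub}" "y \<in> Xs' (n + j')"
    using y by (auto simp: prior_poisson_def)
  then have "meas_subset j' = meas_subset j" using new_target_assoc eq by simp
  then have "j' = j" using meas_subset_inj j j' by auto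
  then show ?thesis using j' by simp
qed

lemma meas_subset_in_prior_image_iff:
  assumes j: "j \<in> {1..nsub}"
  shows "meas_subset j \<in> prior_assoc X a' Xs' ` prior_poisson Y' Xs' \<longleftrightarrow> Xs' (n + j) \<noteq> {}"
proof
  assume "meas_subset j \<in> prior_assoc X a' Xs' ` prior_poisson Y' Xs'"
  then show "Xs' (n + j) \<noteq> {}" using prior_assoc_eq_meas_subset[OF j] by blast
next
  assume "Xs' (n + j) \<noteq> {}"
  then obtain y where y: "y \<in> Xs' (n + j)" by blast
  then have "y \<in> prior_poisson Y' Xs'" using j by (auto simp: prior_poisson_def)
  with new_target_assoc[OF j y] show "meas_subset j \<in> prior_assoc X a' Xs' ` prior_poisson Y' Xs'"
    by (metis image_eqI)
qed

lemma mem_clutter_prior_iff: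
  "z \<in> clutter X (prior_assoc X a' Xs') \<longleftrightarrow>
    (\<exists>j\<in>{1..nsub}. Xs' (n + j) = {} \<and> hyp_meas (n + j) (a' (n + j)) = {z})"
proof
  assume z: "z \<in> clutter X (prior_assoc X a' Xs')"
  then have "z \<in> Zk" by (simp add: clutter_def)
  then obtain c where c: "c \<in> {1..n'}" "z \<in> hyp_meas c (a' c)"
    unfolding hyp_meas_UN[symmetric] by blast
  have "Xs' c = {}"
  proof (rule equals0I)
    fix x assume "x \<in> Xs' c"
    then show False
      using z c prior_assoc_owner[OF c(1)] Xs'_subset[OF c(1)] by (auto simp: clutter_def)
  qed
  with c obtain j where "j \<in> {1..nsub}" "c = n + j" "hyp_meas c (a' c) = meas_subset j"
    "card (meas_subset j) = 1"
    by (elim hyp_meas_nonempty) auto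
  with c \<open>Xs' c = {}\<close> show "\<exists>j\<in>{1..nsub}. Xs' (n + j) = {} \<and> hyp_meas (n + j) (a' (n + j)) = {z}"
    by (metis card_1_singletonE singletonD)
next
  assume "\<exists>j\<in>{1..nsub}. Xs' (n + j) = {} \<and> hyp_meas (n + j) (a' (n + j)) = {z}"
  then obtain j where j: "j \<in> {1..nsub}" and empty: "Xs' (n + j) = {}"
    and meas: "hyp_meas (n + j) (a' (n + j)) = {z}" by blast
  have "z \<notin> prior_assoc X a' Xs' x" if x: "x \<in> X" for x
    using x
  proof (cases rule: prior_assoc_cases)
    case (2 c)
    then have "c \<noteq> n + j" using empty by auto
    then have "hyp_meas c (a' c) \<inter> hyp_meas (n + j) (a' (n + j)) = {}"
      using hyp_meas_disjoint 2(1) new_index_in_range[OF j] unfolding disjoint_family_on_def by blast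
    then show ?thesis using 2(3) meas by auto
  qed simp
  moreover have "z \<in> Zk" using hyp_meas_UN new_index_in_range[OF j] meas by blast
  ultimately show "z \<in> clutter X (prior_assoc X a' Xs')" by (auto simp: clutter_def)
qed

lemma birth_sets_prior_iff:
  assumes j: "j \<in> {1..nsub}"
  shows "meas_subset j \<in> birth_sets X (prior_poisson Y' Xs') (prior_assoc X a' Xs') \<longleftrightarrow> a' (n + j) = 2"
proof -
  have "meas_subset j \<in> (\<lambda>z. {z}) ` clutter X (prior_assoc X a' Xs') \<longleftrightarrow>
      Xs' (n + j) = {} \<and> a' (n + j) = 2 \<and> card (meas_subset j) = 1"
  proof
    assume "meas_subset j \<in> (\<lambda>z. {z}) ` clutter X (prior_assoc X a' Xs')"
    then obtain z j' where z: "meas_subset j = {z}" and j': "j' \<in> {1..nsub}"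
      and "Xs' (n + j') = {}" and meas: "hyp_meas (n + j') (a' (n + j')) = {z}"
      using mem_clutter_prior_iff by blast
    moreover have "a' (n + j') = 2" and "meas_subset j' = {z}"
      using meas hyp_meas_new[OF j'] by (auto split: if_splits)
    moreover have "j' = j" using z meas_subset_inj j j' \<open>meas_subset j' = {z}\<close> by auto
    ultimately show "Xs' (n + j) = {} \<and> a' (n + j) = 2 \<and> card (meas_subset j) = 1" by simp
  next
    assume asm: "Xs' (n + j) = {} \<and> a' (n + j) = 2 \<and> card (meas_subset j) = 1"
    then have "card (meas_subset j) = 1" by simp
    then obtain z where z: "meas_subset j = {z}" by (rule card_1_singletonE)
    then have "hyp_meas (n + j) (a' (n + j)) = {z}" using asm hyp_meas_new[OF j] by simp
    then have "z \<in> clutter X (prior_assoc X a' Xs')" using j asm mem_clutter_prior_iff by blast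
    then show "meas_subset j \<in> (\<lambda>z. {z}) ` clutter X (prior_assoc X a' Xs')" using z by blast
  qed
  moreover have "a' (n + j) = 2 \<and> Xs' (n + j) = {} \<Longrightarrow> card (meas_subset j) = 1"
    using admissible_at[OF new_index_in_range[OF j]] j by (simp add: local_admissible_def)
  ultimately show ?thesis
    using meas_subset_in_prior_image_iff[OF j] new_nonempty_hyp[OF j]
    by (auto simp: birth_sets_def)
qed

lemma undetected_prior: "{y \<in> prior_poisson Y' Xs'. prior_assoc X a' Xs' y = {}} = Y'"
proof
  have "prior_assoc X a' Xs' y \<noteq> {}" if "j \<in> {1..nsub}" "y \<in> Xs' (n + j)" for j y
    using new_target_assoc[OF that] meas_subset_nonempty[OF that(1)] by simp
  then show "{y \<in> prior_poisson Y' Xs'. prior_assoc X a' Xs' y = {}} \<subseteq> Y'"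
    unfolding prior_poisson_def by blast
  show "Y' \<subseteq> {y \<in> prior_poisson Y' Xs'. prior_assoc X a' Xs' y = {}}"
    using prior_assoc_undetected by (auto simp: prior_poisson_def)
qed

lemma post_assign_prior:
  "post_assign (prior_poisson Y' Xs') (restrict Xs' {1..n}) (prior_assoc X a' Xs') = Xs'"
proof
  fix c
  show "post_assign (prior_poisson Y' Xs') (restrict Xs' {1..n}) (prior_assoc X a' Xs') c = Xs' c"
  proof (cases "c \<in> {1..n'}")
    case True
    then show ?thesis
    proof (cases rule: bernoulli_index_cases)
      case old
      then show ?thesis by (simp add: post_assign_old)
    next
      case (new j)
      have "y \<in> prior_poisson Y' Xs'" if "y \<in> Xs' (n + j)" for y
        using that new(1) by (auto simp: prior_poisson_def)
      then show ?thesis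
        using prior_assoc_eq_meas_subset[OF new(1)] new_target_assoc[OF new(1)]
        by (auto simp: new(2) post_assign_new[OF new(1)])
    qed
  next
    case False
    then show ?thesis using Xs' by (simp add: post_assign_outside decomps_def PiE_def extensional_def)
  qed
qed

lemma post_hyp_prior:
  "post_hyp X (prior_poisson Y' Xs') (restrict (\<lambda>i. prev_hyp i (a' i)) {1..n}) (restrict Xs' {1..n})
    (prior_assoc X a' Xs') = a'"
  (is "?a = a'")
proof
  fix c show "?a c = a' c"
  proof (cases "c \<in> {1..n'}")
    case True
    then show ?thesis
    proof (cases rule: bernoulli_index_cases)
      case old
      note decode = old_hyp_decode[OF old a'_range[OF True]]
      have "subset_index (\<Union>x\<in>Xs' c. prior_assoc X a' Xs' x) = assoc_index c (a' c)"
      proof -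
        have "subsingleton (Xs' c)" using admissible_at[OF True] by (simp add: local_admissible_def)
        then consider "Xs' c = {}" | x where "Xs' c = {x}" by (rule subsingleton_cases)
        then show ?thesis
        proof cases
          case 1
          then show ?thesis using admissible_at[OF True] old by (simp add: local_admissible_def)
        next
          case (2 x)
          then show ?thesis
            using prior_assoc_owner[OF True] subset_index_meas_subset[OF decode(2)] old
            by (simp add: hyp_meas_def)
        qed
      qed
      then show ?thesis using decode(3) old by (simp add: post_hyp_old)
    next
      case (new j)
      then show ?thesis
        using new_hyp_cases[OF new(1)]
        by (auto simp: new(2) post_hyp_new[OF new(1)] birth_sets_prior_iff[OF new(1)])
    qed
  next
    case False
    then show ?thesis using a'_PiE by (simp add: post_hyp_outside PiE_def extensional_def)
  qed
qed

lemma to_post_to_prior: "to_post X (to_prior X (Y', a', Xs')) = (Y', a', Xs')"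
  using undetected_prior post_hyp_prior post_assign_prior by (simp add: to_prior_def to_post_def)

end


lemma sum_prior_terms_eq_sum_post_terms:
  assumes X: "finite X"
  shows "(\<Sum>p\<in>prior_terms X. prior_term X p) = (\<Sum>q\<in>post_terms X. post_term q)"
proof -
  have "(\<Sum>p\<in>prior_terms X. prior_term X p) = (\<Sum>p\<in>{p \<in> prior_terms X. prior_admissible p}. prior_term X p)"
    using finite_prior_terms[OF X] prior_term_eq_0[OF X] by (intro sum.mono_neutral_right) auto
  also have "\<dots> = (\<Sum>q\<in>{q \<in> post_terms X. post_admissible q}. post_term q)"
  proof (rule sum.reindex_bij_witness[of _ "to_prior X" "to_post X"])
    fix p assume "p \<in> {p \<in> prior_terms X. prior_admissible p}"
    moreover obtain Y a Xs Zs where p: "p = (Y, a, Xs, Zs)" by (cases p) auto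
    ultimately have asm: "Y \<subseteq> X" "a \<in> hyps" "Xs \<in> decomps n (X - Y)" "Zs \<in> assocs X Zk"
      "\<forall>i\<in>{1..n}. subsingleton (Xs i)"
      by (auto simp: p prior_terms_def prior_admissible_def)
    show "to_prior X (to_post X p) = p"
      unfolding p by (rule to_prior_to_post[OF X asm])
    show "to_post X p \<in> {q \<in> post_terms X. post_admissible q}"
      unfolding p using to_post_in_post_terms[OF X asm] to_post_admissible[OF X asm] by simp
    show "post_term (to_post X p) = prior_term X p"
      unfolding p by (rule post_term_to_post[OF X asm])
  next
    fix q assume "q \<in> {q \<in> post_terms X. post_admissible q}"
    moreover obtain Y' a' Xs' where q: "q = (Y', a', Xs')" by (cases q) auto
    ultimately have asm: "Y' \<subseteq> X" "a' \<in> hyps'" "Xs' \<in> decomps n' (X - Y')"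
      "post_admissible (Y', a', Xs')"
      by (auto simp: q post_terms_def)
    show "to_post X (to_prior X q) = q"
      unfolding q by (rule to_post_to_prior[OF X asm])
    show "to_prior X q \<in> {p \<in> prior_terms X. prior_admissible p}"
      unfolding q using to_prior_in_prior_terms[OF X asm] to_prior_admissible[OF X asm] by simp
  qed
  also have "\<dots> = (\<Sum>q\<in>post_terms X. post_term q)"
    using finite_post_terms[OF X] post_term_eq_0[OF X] by (intro sum.mono_neutral_left) auto
  finally show ?thesis .
qed

lemma wsum_pos: "0 < wsum"
  using w_norm by (simp add: wsum_def hyps_def Mprev_def)

lemma wsum'_pos: "0 < wsum'"
proof -
  \<comment> \<open>The witness updates a predicted hypothesis of positive weight with no targets at all:
    every previous Bernoulli misses and every measurement is clutter.\<close>
  have "wsum \<noteq> 0" using wsum_pos by simp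
  then obtain a where a: "a \<in> hyps" and w_a: "(\<Prod>i\<in>{1..n}. w i (a i)) \<noteq> 0"
    unfolding wsum_def by (rule sum.not_neutral_contains_not_neutral)
  define Xs :: "nat \<Rightarrow> 'x set" where "Xs = restrict (\<lambda>_. {}) {1..n}"
  define Zs :: "'x \<Rightarrow> 'z set" where "Zs = restrict (\<lambda>_. {}) {}"
  have asm: "finite {}" "{} \<subseteq> {}" "a \<in> hyps" "Xs \<in> decomps n ({} - {})" "Zs \<in> assocs {} Zk"
    "\<forall>i\<in>{1..n}. subsingleton (Xs i)"
    using a by (auto simp: Xs_def Zs_def decomps_def assocs_def subsingleton_def disjoint_family_on_def)
  have w_pos: "0 < w i (a i)" if i: "i \<in> {1..n}" for i
  proof -
    have "0 \<le> w i (a i)" using w_nonneg a_range[OF asm i] i by simp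
    moreover have "w i (a i) \<noteq> 0" using w_a i by auto
    ultimately show ?thesis by simp
  qed
  let ?a' = "post_hyp {} {} a Xs Zs"
  have "0 < w' c (?a' c)" if c: "c \<in> {1..n'}" for c
    using c
  proof (cases rule: bernoulli_index_cases)
    case old
    then show ?thesis
      using missed_update(1,2)[OF old a_range[OF asm old]] w_pos[OF old]
      by (simp add: post_hyp_old Xs_def)
  next
    case (new j)
    then show ?thesis
      using birth_update(1,4,5,6)[OF new(1)] by (auto simp: post_hyp_new[OF new(1)])
  qed
  then have "0 < (\<Prod>c\<in>{1..n'}. w' c (?a' c))" by (intro prod_pos) auto
  also have "\<dots> \<le> wsum'"
    unfolding wsum'_def using post_hyp_in_hyps'[OF asm] finite_glob_hyps w'_nonneg
    by (intro member_le_sum prod_nonneg) (auto simp: hyps'_def glob_hyps_iff PiE_iff)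
  finally show ?thesis .
qed

theorem posterior_proportional_to_pmbm:
  "\<exists>c>0. \<forall>X. finite X \<longrightarrow>
     meas_lik lamC g (zs ` {1..mc k}) X * pmbm_dens mu lam n h w r f M (meas_pairs mc (k - 1)) X
   = c * pmbm_dens mu lam' n' h' w' r' f' M' (meas_pairs mc k) X"
proof (intro exI conjI allI impI)
  define K where "K = exp (- (\<integral>x. lam x \<partial>mu)) * exp (- (\<integral>z. lamC z \<partial>lborel)) / wsum"
  define K' where "K' = exp (- (\<integral>x. lam' x \<partial>mu)) / wsum'"
  have "0 < K" "0 < K'" using wsum_pos wsum'_pos by (simp_all add: K_def K'_def)
  then show "0 < K / K'" by simp
  fix X :: "'x set" assume X: "finite X"
  show "meas_lik lamC g (zs ` {1..mc k}) X * pmbm_dens mu lam n h w r f M (meas_pairs mc (k - 1)) X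
      = K / K' * pmbm_dens mu lam' n' h' w' r' f' M' (meas_pairs mc k) X"
    using prior_expansion[OF X] post_expansion[OF X] sum_prior_terms_eq_sum_post_terms[OF X] \<open>0 < K'\<close>
    unfolding K_def[symmetric] K'_def[symmetric] Zk_def Mprev_def Mcur_def by simp
qed

end

theorem theorem1:
  fixes mu :: "('x::{t2_space, second_countable_topology}) measure"
    and lam :: "'x \<Rightarrow> real"
    and lamC :: "real ^ 'nz \<Rightarrow> real"
    and g :: "(real ^ 'nz) set \<Rightarrow> 'x \<Rightarrow> real"
    and k :: nat and mc :: "nat \<Rightarrow> nat"
    and zs :: "nat \<Rightarrow> real ^ 'nz"
    and sub :: "nat \<Rightarrow> (real ^ 'nz) set"
    and n :: nat and h :: "nat \<Rightarrow> nat"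
    and w r :: "nat \<Rightarrow> nat \<Rightarrow> real"
    and f :: "nat \<Rightarrow> nat \<Rightarrow> 'x \<Rightarrow> real"
    and M :: "nat \<Rightarrow> nat \<Rightarrow> (nat \<times> nat) set"
    and n' :: nat and lam' :: "'x \<Rightarrow> real" and h' :: "nat \<Rightarrow> nat"
    and w' r' :: "nat \<Rightarrow> nat \<Rightarrow> real"
    and f' :: "nat \<Rightarrow> nat \<Rightarrow> 'x \<Rightarrow> real"
    and M' :: "nat \<Rightarrow> nat \<Rightarrow> (nat \<times> nat) set"
  assumes space_X: "locally_compact_space (euclidean :: 'x topology)"
    and mu_borel: "sets mu = sets borel"
    and lam_nonneg: "\<forall>x. lam x \<ge> 0" and lam_int: "integrable mu lam"
    and lamC_nonneg: "\<forall>z. lamC z \<ge> 0" and lamC_int: "integrable lborel lamC"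
    and g_nonneg: "\<forall>S x. g S x \<ge> 0"
    and k_pos: "k \<ge> 1"
    and zs_inj: "inj_on zs {1..mc k}"
    and sub_bij: "bij_betw sub {1..2 ^ mc k - 1} {S. S \<subseteq> zs ` {1..mc k} \<and> S \<noteq> {}}"
    and M_sub: "\<forall>i\<in>{1..n}. \<forall>a\<in>{1..h i}. M i a \<subseteq> meas_pairs mc (k - 1)"
    and w_nonneg: "\<forall>i\<in>{1..n}. \<forall>a\<in>{1..h i}. w i a \<ge> 0"
    and r_range: "\<forall>i\<in>{1..n}. \<forall>a\<in>{1..h i}. 0 \<le> r i a \<and> r i a \<le> 1"
    and f_dens: "\<forall>i\<in>{1..n}. \<forall>a\<in>{1..h i}. (\<forall>x. f i a x \<ge> 0) \<and> integrable mu (f i a)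
                   \<and> (\<integral>x. f i a x \<partial>mu) = 1"
    and w_norm: "(\<Sum>a\<in>glob_hyps n h M (meas_pairs mc (k - 1)). \<Prod>i\<in>{1..n}. w i (a i)) > 0"
    and l_miss_pos: "\<forall>i\<in>{1..n}. \<forall>a\<in>{1..h i}. (\<integral>x. f i a x * g {} x \<partial>mu) > 0"
    and l_det_pos: "\<forall>i\<in>{1..n}. \<forall>a\<in>{1..h i}. \<forall>j\<in>{1..2 ^ mc k - 1}.
                      (\<integral>x. f i a x * g (sub j) x \<partial>mu) > 0"
    and l_new_pos: "\<forall>j\<in>{1..2 ^ mc k - 1}. (\<integral>x. lam x * g (sub j) x \<partial>mu) > 0"
    \<comment> \<open>(i)\<close>
    and upd_n: "n' = n + 2 ^ mc k - 1"
    and upd_lam: "\<forall>x. lam' x = g {} x * lam x"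
    \<comment> \<open>(ii) previously existing Bernoullis\<close>
    and upd_h_old: "\<forall>i\<in>{1..n}. h' i = 2 ^ mc k * h i"
    and upd_miss: "\<forall>i\<in>{1..n}. \<forall>a\<in>{1..h i}.
        M' i a = M i a \<and>
        w' i a = w i a * (1 - r i a + r i a * (\<integral>x. f i a x * g {} x \<partial>mu)) \<and>
        r' i a = r i a * (\<integral>x. f i a x * g {} x \<partial>mu)
                 / (1 - r i a + r i a * (\<integral>x. f i a x * g {} x \<partial>mu)) \<and>
        (\<forall>x. f' i a x = g {} x * f i a x / (\<integral>x. f i a x * g {} x \<partial>mu))"
    and upd_det: "\<forall>i\<in>{1..n}. \<forall>b\<in>{1..h i}. \<forall>j\<in>{1..2 ^ mc k - 1}.
        r' i (b + h i * j) = 1 \<and>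
        M' i (b + h i * j) = M i b \<union> {(k, p) | p. p \<in> {1..mc k} \<and> zs p \<in> sub j} \<and>
        w' i (b + h i * j) = w i b * r i b * (\<integral>x. f i b x * g (sub j) x \<partial>mu) \<and>
        (\<forall>x. f' i (b + h i * j) x = g (sub j) x * f i b x / (\<integral>x. f i b x * g (sub j) x \<partial>mu))"
    \<comment> \<open>(iii) new Bernoullis\<close>
    and upd_new: "\<forall>j\<in>{1..2 ^ mc k - 1}.
        h' (n + j) = 2 \<and>
        M' (n + j) 1 = {} \<and> w' (n + j) 1 = 1 \<and> r' (n + j) 1 = 0 \<and>
        M' (n + j) 2 = {(k, p) | p. p \<in> {1..mc k} \<and> zs p \<in> sub j} \<and>
        w' (n + j) 2 = (if card (sub j) = 1 then \<Prod>z\<in>sub j. lamC z else 0)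
                       + (\<integral>x. lam x * g (sub j) x \<partial>mu) \<and>
        r' (n + j) 2 = (\<integral>x. lam x * g (sub j) x \<partial>mu) / w' (n + j) 2 \<and>
        (\<forall>x. f' (n + j) 2 x = g (sub j) x * lam x / (\<integral>x. lam x * g (sub j) x \<partial>mu))"
  shows "\<exists>c > 0. \<forall>X. finite X \<longrightarrow>
           meas_lik lamC g (zs ` {1..mc k}) X * pmbm_dens mu lam n h w r f M (meas_pairs mc (k - 1)) X
         = c * pmbm_dens mu lam' n' h' w' r' f' M' (meas_pairs mc k) X"
proof -
  interpret pmbm_update lamC g mu lam k mc zs sub n h w r f M n' lam' h' w' r' f' M'
    using lamC_nonneg k_pos sub_bij M_sub w_nonneg r_range w_norm l_miss_pos l_det_pos l_new_pos
      upd_n upd_lam upd_h_old upd_miss upd_det upd_new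
    by unfold_locales
  show ?thesis by (rule posterior_proportional_to_pmbm)
qed

end
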